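(* Let $(\Omega,\Sigma,\mu)$ be a measure space. The following are equivalent: (1) $L_1(\mu)$ has the Daugavet property; (2) $L_1(\mu)$ contains a ccs Daugavet point; (3) $L_1(\mu)$ has the strong diameter 2 property; (4) $\mu$ has no atom of finite measure.
   Context: A Banach space $Z$ has the Daugavet property if $\|\mathrm{Id}+T\|=1+\|T\|$ for every rank-one operator $T:Z\to Z$. Slices of $B_Z$ are non-empty sets $\{w\in B_Z:\operatorname{Re}z^*(w)>\|z^*\|-\delta\}$ ($z^*\in Z^*$, $\delta>0$); a ccs is $\sum_{i=1}^n\lambda_iS_i$ with $\lambda_i\in(0,1]$, $\sum\lambda_i=1$, $S_i$ slices. $z\in S_Z$ is a ccs Daugavet point if $\sup_{w\in C}\|z-w\|=2$ for every ccs $C$ of $B_Z$. $Z$ has the strong diameter 2 property if every ccs of $B_Z$ has diameter $2$. *)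

theory Defs
  imports "HOL-Analysis.Analysis"
begin

text \<open>L_1(mu) over the reals, realised on integrable functions with the L1 seminorm
  (elements equal a.e. are identified implicitly: all notions below depend only
  on the seminorm, and bounded functionals vanish on null functions).\<close>

definition L1set :: "'a measure \<Rightarrow> ('a \<Rightarrow> real) set" where
  "L1set M = {f. integrable M f}"

definition L1norm :: "'a measure \<Rightarrow> ('a \<Rightarrow> real) \<Rightarrow> real" where
  "L1norm M f = (\<integral>x. \<bar>f x\<bar> \<partial>M)"

definition L1ball :: "'a measure \<Rightarrow> ('a \<Rightarrow> real) set" where
  "L1ball M = {f \<in> L1set M. L1norm M f \<le> 1}"

definition L1sphere :: "'a measure \<Rightarrow> ('a \<Rightarrow> real) set" where
  "L1sphere M = {f \<in> L1set M. L1norm M f = 1}"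

definition L1_functional :: "'a measure \<Rightarrow> (('a \<Rightarrow> real) \<Rightarrow> real) \<Rightarrow> bool" where
  "L1_functional M \<phi> \<longleftrightarrow>
     (\<forall>f\<in>L1set M. \<forall>g\<in>L1set M. \<phi> (\<lambda>x. f x + g x) = \<phi> f + \<phi> g) \<and>
     (\<forall>f\<in>L1set M. \<forall>c. \<phi> (\<lambda>x. c * f x) = c * \<phi> f) \<and>
     (\<exists>C. \<forall>f\<in>L1set M. \<bar>\<phi> f\<bar> \<le> C * L1norm M f)"

definition L1_dual_norm :: "'a measure \<Rightarrow> (('a \<Rightarrow> real) \<Rightarrow> real) \<Rightarrow> real" where
  "L1_dual_norm M \<phi> = (SUP f\<in>L1ball M. \<bar>\<phi> f\<bar>)"

text \<open>Daugavet property: every rank-one operator T = \<phi> \<otimes> g (with \<phi> \<noteq> 0, g \<noteq> 0),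
  T f = \<phi>(f) g, satisfies ||Id + T|| = 1 + ||T||, where ||T|| = ||\<phi>|| ||g||.\<close>
definition L1_daugavet :: "'a measure \<Rightarrow> bool" where
  "L1_daugavet M \<longleftrightarrow>
     (\<forall>\<phi> g. L1_functional M \<phi> \<and> L1_dual_norm M \<phi> \<noteq> 0 \<and> g \<in> L1set M \<and> L1norm M g \<noteq> 0 \<longrightarrow>
        (SUP f\<in>L1ball M. L1norm M (\<lambda>x. f x + \<phi> f * g x))
          = 1 + L1_dual_norm M \<phi> * L1norm M g)"

definition L1_slice :: "'a measure \<Rightarrow> (('a \<Rightarrow> real) \<Rightarrow> real) \<Rightarrow> real \<Rightarrow> ('a \<Rightarrow> real) set" where
  "L1_slice M \<phi> \<delta> = {w \<in> L1ball M. \<phi> w > L1_dual_norm M \<phi> - \<delta>}"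

definition is_L1_slice :: "'a measure \<Rightarrow> ('a \<Rightarrow> real) set \<Rightarrow> bool" where
  "is_L1_slice M S \<longleftrightarrow> S \<noteq> {} \<and> (\<exists>\<phi> \<delta>. L1_functional M \<phi> \<and> \<delta> > 0 \<and> S = L1_slice M \<phi> \<delta>)"

definition is_L1_ccs :: "'a measure \<Rightarrow> ('a \<Rightarrow> real) set \<Rightarrow> bool" where
  "is_L1_ccs M C \<longleftrightarrow>
     (\<exists>n::nat. \<exists>lam::nat \<Rightarrow> real. \<exists>S::nat \<Rightarrow> ('a \<Rightarrow> real) set.
        n \<ge> 1 \<and> (\<forall>i<n. 0 < lam i \<and> lam i \<le> 1 \<and> is_L1_slice M (S i)) \<and>
        (\<Sum>i<n. lam i) = 1 \<and>
        C = {(\<lambda>x. \<Sum>i<n. lam i * w i x) | w. \<forall>i<n. w i \<in> S i})"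

definition L1_ccs_daugavet_point :: "'a measure \<Rightarrow> ('a \<Rightarrow> real) \<Rightarrow> bool" where
  "L1_ccs_daugavet_point M z \<longleftrightarrow> z \<in> L1sphere M \<and>
     (\<forall>C. is_L1_ccs M C \<longrightarrow> (SUP w\<in>C. L1norm M (\<lambda>x. z x - w x)) = 2)"

definition L1_SD2P :: "'a measure \<Rightarrow> bool" where
  "L1_SD2P M \<longleftrightarrow>
     (\<forall>C. is_L1_ccs M C \<longrightarrow> (SUP p\<in>C \<times> C. L1norm M (\<lambda>x. fst p x - snd p x)) = 2)"

definition is_atom :: "'a measure \<Rightarrow> 'a set \<Rightarrow> bool" where
  "is_atom M A \<longleftrightarrow> A \<in> sets M \<and> 0 < emeasure M A \<and>
     (\<forall>B\<in>sets M. B \<subseteq> A \<longrightarrow> emeasure M B = 0 \<or> emeasure M (A - B) = 0)"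

end

theory Submission
  imports Defs
begin

text \<open>
  If \<open>\<mu>\<close> has an atom \<open>A\<close> of finite measure, integrable functions have a.e. constant sign on \<open>A\<close>.
  Hence \<open>\<phi> f = \<integral>\<^sub>A f\<close> has norm one, the operator \<open>Id - \<phi> \<otimes> 1\<^sub>A/\<mu>(A)\<close> has norm one as well, and the
  average of the slices \<open>{\<phi> > 1/2}\<close> and \<open>{\<phi> < -1/2}\<close> lies in the ball of radius \<open>1/2\<close>; this rules out
  all three properties.

  If there is no atom of finite measure, every finite measure \<open>g \<mu>\<close> with integrable density can be cut
  into pieces of arbitrarily small positive mass. Each slice \<open>S\<close> comes with a finitely additive set
  function \<open>\<psi>\<close>, dominated by such a measure, with \<open>\<psi>(\<Omega>) > 0\<close> and such that every set \<open>E\<close> with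
  \<open>\<psi>(E) > 0\<close> supports a normalized element of \<open>S\<close>. An exhaustion argument produces, for slices
  \<open>S\<^sub>1, \<dots>, S\<^sub>n\<close> and any \<open>z\<close>, pairwise disjoint such sets \<open>E\<^sub>i\<close> carrying little mass of \<open>z\<close>. The
  resulting element \<open>u = \<Sum> \<lambda>\<^sub>i v\<^sub>i\<close> of the ccs has norm one and \<open>\<parallel>z - u\<parallel> \<ge> \<parallel>z\<parallel> + 1 - \<epsilon>\<close>, which
  yields the strong diameter 2 property, ccs Daugavet points and, applied to a single thin slice, the
  Daugavet property.
\<close>

lemma L1norm_nonneg: "0 \<le> L1norm M f"
  unfolding L1norm_def by simp

lemma L1norm_cmult: "L1norm M (\<lambda>x. c * f x) = \<bar>c\<bar> * L1norm M f"
  unfolding L1norm_def by (simp add: abs_mult)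

lemma L1set_add: "f \<in> L1set M \<Longrightarrow> g \<in> L1set M \<Longrightarrow> (\<lambda>x. f x + g x) \<in> L1set M"
  unfolding L1set_def by auto

lemma L1set_diff: "f \<in> L1set M \<Longrightarrow> g \<in> L1set M \<Longrightarrow> (\<lambda>x. f x - g x) \<in> L1set M"
  unfolding L1set_def by auto

lemma L1set_cmult: "f \<in> L1set M \<Longrightarrow> (\<lambda>x. c * f x) \<in> L1set M"
  unfolding L1set_def by auto

lemma zero_in_L1ball: "(\<lambda>x. 0) \<in> L1ball M"
  unfolding L1ball_def L1set_def L1norm_def by simp

lemma L1norm_add_le:
  assumes "f \<in> L1set M" "g \<in> L1set M"
  shows "L1norm M (\<lambda>x. f x + g x) \<le> L1norm M f + L1norm M g"
proof -
  have "(\<integral>x. \<bar>f x + g x\<bar> \<partial>M) \<le> (\<integral>x. \<bar>f x\<bar> + \<bar>g x\<bar> \<partial>M)"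
    by (rule integral_mono) (use assms in \<open>auto simp: L1set_def\<close>)
  also have "\<dots> = (\<integral>x. \<bar>f x\<bar> \<partial>M) + (\<integral>x. \<bar>g x\<bar> \<partial>M)"
    using assms by (simp add: L1set_def)
  finally show ?thesis unfolding L1norm_def .
qed

lemma L1norm_diff_le:
  assumes "f \<in> L1set M" "g \<in> L1set M"
  shows "L1norm M (\<lambda>x. f x - g x) \<le> L1norm M f + L1norm M g"
  using L1norm_add_le[OF assms(1) L1set_cmult[OF assms(2), of "-1"]] L1norm_cmult[of M "-1" g]
  by simp

lemma L1_functional_add:
  "L1_functional M \<phi> \<Longrightarrow> f \<in> L1set M \<Longrightarrow> g \<in> L1set M \<Longrightarrow> \<phi> (\<lambda>x. f x + g x) = \<phi> f + \<phi> g"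
  unfolding L1_functional_def by blast

lemma L1_functional_cmult:
  "L1_functional M \<phi> \<Longrightarrow> f \<in> L1set M \<Longrightarrow> \<phi> (\<lambda>x. c * f x) = c * \<phi> f"
  unfolding L1_functional_def by blast

lemma L1_functional_uminus: "L1_functional M \<phi> \<Longrightarrow> L1_functional M (\<lambda>f. - \<phi> f)"
  unfolding L1_functional_def by auto

lemma L1_functional_boundedE:
  assumes "L1_functional M \<phi>"
  obtains C where "C \<ge> 0" "\<And>f. f \<in> L1set M \<Longrightarrow> \<bar>\<phi> f\<bar> \<le> C * L1norm M f"
proof -
  obtain C where C: "\<forall>f\<in>L1set M. \<bar>\<phi> f\<bar> \<le> C * L1norm M f"
    using assms unfolding L1_functional_def by blast
  have "\<bar>\<phi> f\<bar> \<le> max C 0 * L1norm M f" if "f \<in> L1set M" for f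
  proof -
    have "C * L1norm M f \<le> max C 0 * L1norm M f" by (rule mult_right_mono) (auto simp: L1norm_nonneg)
    with C that show ?thesis by fastforce
  qed
  then show ?thesis using that[of "max C 0"] by auto
qed

lemma L1_functional_null:
  assumes "L1_functional M \<phi>" "f \<in> L1set M" "L1norm M f = 0"
  shows "\<phi> f = 0"
proof -
  obtain C where "\<And>f. f \<in> L1set M \<Longrightarrow> \<bar>\<phi> f\<bar> \<le> C * L1norm M f"
    using L1_functional_boundedE[OF assms(1)] by blast
  from this[OF assms(2)] assms(3) show ?thesis by simp
qed

lemma L1_functional_cong:
  assumes \<phi>: "L1_functional M \<phi>" and "f \<in> L1set M" "g \<in> L1set M" "L1norm M (\<lambda>x. f x - g x) = 0"
  shows "\<phi> f = \<phi> g"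
proof -
  have "\<phi> (\<lambda>x. f x - g x) = \<phi> (\<lambda>x. f x + (-1) * g x)" by simp
  also have "\<dots> = \<phi> f - \<phi> g"
    unfolding L1_functional_add[OF \<phi> assms(2) L1set_cmult[OF assms(3)]]
      L1_functional_cmult[OF \<phi> assms(3)] by simp
  finally show ?thesis using L1_functional_null[OF \<phi> L1set_diff] assms by simp
qed

lemma L1_dual_norm_bdd:
  assumes "L1_functional M \<phi>"
  shows "bdd_above ((\<lambda>f. \<bar>\<phi> f\<bar>) ` L1ball M)"
proof -
  obtain C where C: "C \<ge> 0" "\<And>f. f \<in> L1set M \<Longrightarrow> \<bar>\<phi> f\<bar> \<le> C * L1norm M f"
    using L1_functional_boundedE[OF assms] by blast
  have "\<bar>\<phi> f\<bar> \<le> C" if "f \<in> L1ball M" for f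
    using C(2)[of f] mult_left_mono[of "L1norm M f" 1 C] C(1) that unfolding L1ball_def by auto
  then show ?thesis by (meson bdd_aboveI2)
qed

lemma L1_dual_norm_upper: "L1_functional M \<phi> \<Longrightarrow> f \<in> L1ball M \<Longrightarrow> \<bar>\<phi> f\<bar> \<le> L1_dual_norm M \<phi>"
  unfolding L1_dual_norm_def by (rule cSUP_upper) (auto intro: L1_dual_norm_bdd)

lemma L1_dual_norm_nonneg: "L1_functional M \<phi> \<Longrightarrow> 0 \<le> L1_dual_norm M \<phi>"
  using L1_dual_norm_upper[OF _ zero_in_L1ball] by (meson abs_ge_zero order_trans)

lemma L1_dual_norm_uminus: "L1_dual_norm M (\<lambda>f. - \<phi> f) = L1_dual_norm M \<phi>"
  unfolding L1_dual_norm_def by simp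

lemma L1_functional_le_dual_norm:
  assumes \<phi>: "L1_functional M \<phi>" and f: "f \<in> L1set M"
  shows "\<bar>\<phi> f\<bar> \<le> L1_dual_norm M \<phi> * L1norm M f"
proof (cases "L1norm M f = 0")
  case True
  then show ?thesis using L1_functional_null[OF \<phi> f] by simp
next
  case False
  then have pos: "L1norm M f > 0" using L1norm_nonneg[of M f] by simp
  let ?g = "\<lambda>x. (1 / L1norm M f) * f x"
  have "?g \<in> L1ball M"
    using pos L1set_cmult[OF f, of "1 / L1norm M f"] L1norm_cmult[of M "1 / L1norm M f" f]
    unfolding L1ball_def by auto
  then have "\<bar>\<phi> ?g\<bar> \<le> L1_dual_norm M \<phi>" by (rule L1_dual_norm_upper[OF \<phi>])
  moreover have "\<phi> ?g = \<phi> f / L1norm M f" using L1_functional_cmult[OF \<phi> f] by (simp only:) simp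
  ultimately show ?thesis using pos by (simp add: abs_div divide_le_eq)
qed

lemma L1_dual_norm_approx:
  assumes \<phi>: "L1_functional M \<phi>" and t: "t < L1_dual_norm M \<phi>"
  shows "\<exists>f\<in>L1ball M. t < \<phi> f"
proof -
  obtain f where f: "f \<in> L1ball M" "t < \<bar>\<phi> f\<bar>"
    using t unfolding L1_dual_norm_def
    by (subst (asm) less_cSUP_iff) (auto intro: L1_dual_norm_bdd[OF \<phi>] zero_in_L1ball)
  have "(\<lambda>x. (-1) * f x) \<in> L1ball M"
    using f(1) L1set_cmult[of f M "-1"] L1norm_cmult[of M "-1" f] unfolding L1ball_def by auto
  moreover have "\<phi> (\<lambda>x. (-1) * f x) = - \<phi> f"
    using L1_functional_cmult[OF \<phi>, of f "-1"] f(1) unfolding L1ball_def by simp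
  ultimately show ?thesis using f by (cases "\<phi> f \<ge> 0") force+
qed

lemma is_L1_slice_L1_slice:
  assumes "L1_functional M \<phi>" "\<delta> > 0"
  shows "is_L1_slice M (L1_slice M \<phi> \<delta>)"
  using L1_dual_norm_approx[OF assms(1), of "L1_dual_norm M \<phi> - \<delta>"] assms
  unfolding is_L1_slice_def L1_slice_def by auto

lemma cSUP_eq_approx:
  fixes f :: "'b \<Rightarrow> real"
  assumes "C \<noteq> {}" and "\<And>x. x \<in> C \<Longrightarrow> f x \<le> T"
    and approx: "\<And>e. e > 0 \<Longrightarrow> \<exists>x\<in>C. T - e \<le> f x"
  shows "(SUP x\<in>C. f x) = T"
proof (rule cSup_eq_non_empty)
  fix y assume ub: "\<And>z. z \<in> f ` C \<Longrightarrow> z \<le> y"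
  show "T \<le> y"
  proof (rule field_le_epsilon)
    fix e :: real assume "e > 0"
    then obtain x where "x \<in> C" "T - e \<le> f x" using approx by blast
    then show "T \<le> y + e" using ub[of "f x"] by auto
  qed
qed (use assms in auto)

lemma L1set_indicator_mult:
  fixes w :: "'a \<Rightarrow> real"
  shows "w \<in> L1set M \<Longrightarrow> E \<in> sets M \<Longrightarrow> (\<lambda>x. indicator E x * w x) \<in> L1set M"
  unfolding L1set_def using integrable_mult_indicator[of E M w] by simp

lemma integrable_indicator_mult_abs:
  fixes w :: "'a \<Rightarrow> real"
  shows "w \<in> L1set M \<Longrightarrow> E \<in> sets M \<Longrightarrow> integrable M (\<lambda>x. indicator E x * \<bar>w x\<bar>)"
  unfolding L1set_def using integrable_mult_indicator[of E M "\<lambda>x. \<bar>w x\<bar>"] by simp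

lemma L1norm_indicator_mult:
  fixes w :: "'a \<Rightarrow> real"
  shows "L1norm M (\<lambda>x. indicator E x * w x) = (\<integral>x. indicator E x * \<bar>w x\<bar> \<partial>M)"
  unfolding L1norm_def by (simp add: abs_mult)

lemma integral_indicator_mult_abs_nonneg:
  fixes w :: "'a \<Rightarrow> real"
  shows "0 \<le> (\<integral>x. indicator E x * \<bar>w x\<bar> \<partial>M)"
  by (rule integral_nonneg_AE) (simp add: indicator_def)

lemma integral_indicator_mult_abs_le_L1norm:
  fixes w :: "'a \<Rightarrow> real"
  assumes "w \<in> L1set M" "E \<in> sets M"
  shows "(\<integral>x. indicator E x * \<bar>w x\<bar> \<partial>M) \<le> L1norm M w"
  unfolding L1norm_def
  by (rule integral_mono)
    (use assms integrable_indicator_mult_abs[OF assms] in \<open>auto simp: L1set_def indicator_def\<close>)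

lemma integral_indicator_space_mult_abs:
  fixes w :: "'a \<Rightarrow> real"
  shows "(\<integral>x. indicator (space M) x * \<bar>w x\<bar> \<partial>M) = L1norm M w"
  unfolding L1norm_def by (rule Bochner_Integration.integral_cong) auto

lemma L1norm_indicator_space_mult_diff:
  fixes w :: "'a \<Rightarrow> real"
  shows "L1norm M (\<lambda>x. indicator (space M) x * w x - w x) = 0"
  unfolding L1norm_def by (subst Bochner_Integration.integral_cong[where g="\<lambda>x. 0"]) auto

lemma indicator_Un_mult:
  fixes w :: "'a \<Rightarrow> real"
  assumes "E \<inter> F = {}"
  shows "(\<lambda>x. indicator (E \<union> F) x * w x) = (\<lambda>x. indicator E x * w x + indicator F x * w x)"
  using assms by (auto simp: indicator_def fun_eq_iff)

lemma integral_indicator_Un_mult_abs: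
  fixes w :: "'a \<Rightarrow> real"
  assumes "w \<in> L1set M" "E \<in> sets M" "F \<in> sets M" "E \<inter> F = {}"
  shows "(\<integral>x. indicator (E \<union> F) x * \<bar>w x\<bar> \<partial>M) =
         (\<integral>x. indicator E x * \<bar>w x\<bar> \<partial>M) + (\<integral>x. indicator F x * \<bar>w x\<bar> \<partial>M)"
  unfolding indicator_Un_mult[OF assms(4)]
  using integrable_indicator_mult_abs[OF assms(1,2)] integrable_indicator_mult_abs[OF assms(1,3)]
  by simp

lemma normalized_restriction:
  fixes w :: "'a \<Rightarrow> real"
  assumes w: "w \<in> L1set M" and E: "E \<in> sets M" and r: "(\<integral>x. indicator E x * \<bar>w x\<bar> \<partial>M) > 0"
  defines "v \<equiv> \<lambda>x. (1 / (\<integral>x. indicator E x * \<bar>w x\<bar> \<partial>M)) * (indicator E x * w x)"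
  shows "v \<in> L1set M" "L1norm M v = 1" "\<And>x. x \<notin> E \<Longrightarrow> v x = 0" "v \<in> L1ball M"
    and "\<And>\<phi>. L1_functional M \<phi> \<Longrightarrow>
           \<phi> v = \<phi> (\<lambda>x. indicator E x * w x) / (\<integral>x. indicator E x * \<bar>w x\<bar> \<partial>M)"
proof -
  let ?r = "\<integral>x. indicator E x * \<bar>w x\<bar> \<partial>M"
  show v: "v \<in> L1set M" unfolding v_def by (intro L1set_cmult L1set_indicator_mult w E)
  have "L1norm M v = \<bar>1 / ?r\<bar> * L1norm M (\<lambda>x. indicator E x * w x)"
    unfolding v_def by (rule L1norm_cmult)
  then show norm: "L1norm M v = 1" using r by (simp add: L1norm_indicator_mult)
  show "\<And>x. x \<notin> E \<Longrightarrow> v x = 0" unfolding v_def by simp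
  show "v \<in> L1ball M" using v norm unfolding L1ball_def by simp
  show "\<phi> v = \<phi> (\<lambda>x. indicator E x * w x) / ?r" if "L1_functional M \<phi>" for \<phi>
    unfolding v_def using L1_functional_cmult[OF that L1set_indicator_mult[OF w E], of "1 / ?r"]
    by simp
qed

lemma is_L1_ccsE:
  assumes "is_L1_ccs M C"
  obtains n :: nat and lam :: "nat \<Rightarrow> real" and S where "n \<ge> 1" "\<And>i. i < n \<Longrightarrow> 0 < lam i" "\<And>i. i < n \<Longrightarrow> is_L1_slice M (S i)"
    "(\<Sum>i<n. lam i) = 1" "C = {(\<lambda>x. \<Sum>i<n. lam i * w i x) | w. \<forall>i<n. w i \<in> S i}"
  using assms unfolding is_L1_ccs_def by blast

lemma L1_ccs_nonempty:
  assumes "is_L1_ccs M C"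
  shows "C \<noteq> {}"
proof -
  obtain n :: nat and lam S where "n \<ge> 1" "\<And>i. i < n \<Longrightarrow> 0 < lam i"
    and S: "\<And>i. i < n \<Longrightarrow> is_L1_slice M (S i)" and "(\<Sum>i<n. lam i) = 1"
    and C: "C = {(\<lambda>x. \<Sum>i<n. lam i * w i x) | w. \<forall>i<n. w i \<in> S i}"
    by (elim is_L1_ccsE[OF assms])
  have "\<forall>i. \<exists>w. i < n \<longrightarrow> w \<in> S i" using S unfolding is_L1_slice_def by blast
  then obtain w where "\<forall>i. i < n \<longrightarrow> w i \<in> S i" by metis
  then show ?thesis unfolding C by auto
qed

lemma L1_ccs_subset_ball:
  assumes "is_L1_ccs M C"
  shows "C \<subseteq> L1ball M"
proof
  obtain n :: nat and lam S where "n \<ge> 1" and lam: "\<And>i. i < n \<Longrightarrow> 0 < lam i"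
    and S: "\<And>i. i < n \<Longrightarrow> is_L1_slice M (S i)" and sum: "(\<Sum>i<n. lam i) = 1"
    and C: "C = {(\<lambda>x. \<Sum>i<n. lam i * w i x) | w. \<forall>i<n. w i \<in> S i}"
    by (elim is_L1_ccsE[OF assms])
  fix c assume "c \<in> C"
  then obtain w where w: "\<forall>i<n. w i \<in> S i" and c: "c = (\<lambda>x. \<Sum>i<n. lam i * w i x)"
    unfolding C by blast
  have ball: "w i \<in> L1ball M" if "i < n" for i
    using w S that unfolding is_L1_slice_def L1_slice_def by auto
  then have int: "integrable M (w i)" if "i < n" for i
    using that unfolding L1ball_def L1set_def by auto
  have "L1norm M c \<le> (\<integral>x. (\<Sum>i<n. lam i * \<bar>w i x\<bar>) \<partial>M)"
    unfolding L1norm_def c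
  proof (rule integral_mono)
    fix x
    have "\<bar>\<Sum>i<n. lam i * w i x\<bar> \<le> (\<Sum>i<n. \<bar>lam i * w i x\<bar>)" by (rule sum_abs)
    also have "\<dots> = (\<Sum>i<n. lam i * \<bar>w i x\<bar>)" using lam by (intro sum.cong) (simp_all add: abs_mult abs_of_pos)
    finally show "\<bar>\<Sum>i<n. lam i * w i x\<bar> \<le> (\<Sum>i<n. lam i * \<bar>w i x\<bar>)" .
  qed (use int in \<open>auto intro!: integrable_abs Bochner_Integration.integrable_sum integrable_mult_right\<close>)
  also have "\<dots> = (\<Sum>i<n. lam i * L1norm M (w i))"
    unfolding L1norm_def using int by (simp add: integral_sum)
  also have "\<dots> \<le> (\<Sum>i<n. lam i * 1)"
    using ball lam unfolding L1ball_def by (intro sum_mono mult_left_mono) (auto intro: less_imp_le)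
  finally have "L1norm M c \<le> 1" using sum by simp
  moreover have "c \<in> L1set M" unfolding c L1set_def using int by auto
  ultimately show "c \<in> L1ball M" unfolding L1ball_def by simp
qed

lemma L1_nonzero_element:
  assumes "\<exists>A\<in>sets M. 0 < emeasure M A \<and> emeasure M A < \<infinity>"
  shows "\<exists>w\<in>L1set M. L1norm M w > 0"
proof -
  obtain A where A: "A \<in> sets M" "0 < emeasure M A" "emeasure M A < \<infinity>" using assms by blast
  have "emeasure M A = ennreal (measure M A)" using A(3) by (intro emeasure_eq_ennreal_measure) auto
  then have "measure M A > 0" using A(2) by (metis ennreal_less_zero_iff)
  moreover have "L1norm M (\<lambda>x. indicator A x) = measure M A" unfolding L1norm_def using A by simp
  moreover have "(\<lambda>x. indicator A x) \<in> L1set M"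
    unfolding L1set_def using A by (simp add: integrable_real_indicator)
  ultimately show ?thesis by (intro bexI[of _ "\<lambda>x. indicator A x"]) auto
qed

lemma is_L1_ccs_slice:
  assumes "is_L1_slice M S"
  shows "is_L1_ccs M S"
  unfolding is_L1_ccs_def
proof (intro exI[of _ 1] exI[of _ "\<lambda>_. 1"] exI[of _ "\<lambda>_. S"] conjI)
  show "S = {(\<lambda>x. \<Sum>i<1. 1 * w i x) | w. \<forall>i<(1::nat). w i \<in> (\<lambda>_. S) i}"
  proof (intro set_eqI iffI)
    fix f assume "f \<in> S"
    then show "f \<in> {(\<lambda>x. \<Sum>i<1. 1 * w i x) | w. \<forall>i<(1::nat). w i \<in> (\<lambda>_. S) i}"
      by (intro CollectI exI[of _ "\<lambda>_. f"]) auto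
  qed auto
qed (use assms in auto)

section \<open>Small sets of positive mass for dominated additive set functions\<close>

definition halvable :: "'a measure \<Rightarrow> bool" where
  "halvable N \<longleftrightarrow> (\<forall>E\<in>sets N. 0 < measure N E \<longrightarrow>
     (\<exists>F\<in>sets N. F \<subseteq> E \<and> 0 < measure N F \<and> measure N F \<le> measure N E / 2))"

lemma halvable_small_subset:
  assumes N: "halvable N" and E: "E \<in> sets N" "0 < measure N E" and \<epsilon>: "\<epsilon> > 0"
  shows "\<exists>F\<in>sets N. F \<subseteq> E \<and> 0 < measure N F \<and> measure N F \<le> \<epsilon>"
proof -
  have iter: "\<exists>F\<in>sets N. F \<subseteq> E \<and> 0 < measure N F \<and> measure N F \<le> measure N E / 2 ^ k" for k
  proof (induction k)
    case (Suc k)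
    then obtain F where F: "F \<in> sets N" "F \<subseteq> E" "0 < measure N F" "measure N F \<le> measure N E / 2 ^ k"
      by blast
    then obtain F' where F': "F' \<in> sets N" "F' \<subseteq> F" "0 < measure N F'" "measure N F' \<le> measure N F / 2"
      using N unfolding halvable_def by blast
    have "measure N F / 2 \<le> measure N E / 2 ^ Suc k"
      using F(4) by (simp add: field_simps)
    then have "measure N F' \<le> measure N E / 2 ^ Suc k" using F'(4) by linarith
    then show ?case using F(2) F' by blast
  qed (use E in auto)
  obtain k where k: "(1/2::real) ^ k < \<epsilon> / measure N E"
    using real_arch_pow_inv[of "\<epsilon> / measure N E" "1/2"] \<epsilon> E by auto
  have "measure N E / 2 ^ k = measure N E * (1/2) ^ k" by (simp add: field_simps)
  also have "\<dots> \<le> \<epsilon>" using k E by (simp add: field_simps)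
  finally have "measure N E / 2 ^ k \<le> \<epsilon>" .
  moreover obtain F where "F \<in> sets N" "F \<subseteq> E" "0 < measure N F" "measure N F \<le> measure N E / 2 ^ k"
    using iter[of k] by blast
  ultimately show ?thesis by (intro bexI[of _ F]) auto
qed

locale dominated_additive = finite_measure N for N :: "'a measure" +
  fixes \<psi> :: "'a set \<Rightarrow> real" and K :: real
  assumes K_nonneg: "0 \<le> K"
    and additive: "E \<in> sets N \<Longrightarrow> F \<in> sets N \<Longrightarrow> E \<inter> F = {} \<Longrightarrow> \<psi> (E \<union> F) = \<psi> E + \<psi> F"
    and dominated: "E \<in> sets N \<Longrightarrow> \<bar>\<psi> E\<bar> \<le> K * measure N E"
begin

lemma additive_Int_Diff: "G \<in> sets N \<Longrightarrow> A \<in> sets N \<Longrightarrow> \<psi> G = \<psi> (G \<inter> A) + \<psi> (G - A)"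
  using additive[of "G \<inter> A" "G - A"] by (simp add: Int_Diff_Un Int_Diff_disjoint)

lemma psi_empty: "\<psi> {} = 0"
  using additive[of "{}" "{}"] by simp

definition negative_set :: "'a set \<Rightarrow> bool" where
  "negative_set G \<longleftrightarrow> G \<in> sets N \<and> (\<forall>G'\<in>sets N. G' \<subseteq> G \<longrightarrow> \<psi> G' \<le> 0)"

lemma negative_set_Un:
  assumes A: "negative_set A" and B: "negative_set B"
  shows "negative_set (A \<union> B)"
  unfolding negative_set_def
proof (intro conjI ballI impI)
  show "A \<union> B \<in> sets N" using A B unfolding negative_set_def by auto
  fix G assume G: "G \<in> sets N" "G \<subseteq> A \<union> B"
  have As: "A \<in> sets N" using A unfolding negative_set_def by simp
  have "\<psi> (G \<inter> A) \<le> 0" using A G(1) As unfolding negative_set_def by blast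
  moreover have "\<psi> (G - A) \<le> 0" using B G As unfolding negative_set_def by blast
  ultimately show "\<psi> G \<le> 0" using additive_Int_Diff[OF G(1) As] by simp
qed

lemma negative_set_UN_incseq:
  assumes U: "incseq U" "\<And>n. negative_set (U n)"
  shows "negative_set (\<Union>n. U n)"
  unfolding negative_set_def
proof (intro conjI ballI impI)
  have Usets: "range U \<subseteq> sets N" using U(2) unfolding negative_set_def by auto
  then show V: "(\<Union>n. U n) \<in> sets N" by auto
  have lim: "(\<lambda>n. measure N (U n)) \<longlonglongrightarrow> measure N (\<Union>n. U n)"
    by (rule finite_Lim_measure_incseq[OF Usets U(1)])
  fix G assume G: "G \<in> sets N" "G \<subseteq> (\<Union>n. U n)"
  show "\<psi> G \<le> 0"
  proof (rule ccontr)
    assume pos: "\<not> \<psi> G \<le> 0"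
    define \<eta> where "\<eta> = \<psi> G / (2 * (K + 1))"
    have "\<eta> > 0" using pos K_nonneg unfolding \<eta>_def by (intro divide_pos_pos) auto
    have "K / (2 * (K + 1)) < 1" using K_nonneg by (simp add: field_simps)
    then have "\<psi> G * (K / (2 * (K + 1))) < \<psi> G * 1" using pos by (intro mult_strict_left_mono) auto
    then have "K * \<eta> < \<psi> G" unfolding \<eta>_def by (simp add: field_simps)
    obtain n where n: "\<bar>measure N (U n) - measure N (\<Union>n. U n)\<bar> < \<eta>"
      using lim \<open>\<eta> > 0\<close> unfolding LIMSEQ_def dist_real_def by blast
    have Un: "U n \<in> sets N" using Usets by auto
    have "measure N (G - U n) \<le> measure N ((\<Union>n. U n) - U n)"
      using G Un V by (intro finite_measure_mono) auto
    also have "\<dots> = measure N (\<Union>n. U n) - measure N (U n)"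
      using Un V by (intro finite_measure_Diff) auto
    also have "\<dots> < \<eta>" using n by linarith
    finally have tail: "measure N (G - U n) < \<eta>" .
    have "\<psi> G = \<psi> (G \<inter> U n) + \<psi> (G - U n)" by (rule additive_Int_Diff[OF G(1) Un])
    also have "\<dots> \<le> 0 + K * measure N (G - U n)"
      using U(2)[of n] G Un dominated[of "G - U n"] unfolding negative_set_def by (intro add_mono) auto
    also have "\<dots> \<le> K * \<eta>" using tail K_nonneg by (simp add: mult_left_mono)
    finally show False using \<open>K * \<eta> < \<psi> G\<close> by simp
  qed
qed

lemma negative_subset_max:
  assumes D: "D \<in> sets N"
  obtains V where "negative_set V" "V \<subseteq> D"
    "\<And>G. negative_set G \<Longrightarrow> G \<subseteq> D \<Longrightarrow> measure N G \<le> measure N V"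
proof -
  let ?\<nu> = "measure N"
  define T where "T = (SUP G\<in>{G. negative_set G \<and> G \<subseteq> D}. ?\<nu> G)"
  have "negative_set {}" unfolding negative_set_def using psi_empty by auto
  then have ne: "{G. negative_set G \<and> G \<subseteq> D} \<noteq> {}" by auto
  have bdd: "bdd_above (?\<nu> ` {G. negative_set G \<and> G \<subseteq> D})"
    by (rule bdd_aboveI2[where M = "?\<nu> (space N)"]) (simp add: bounded_measure)
  have "\<exists>G. (negative_set G \<and> G \<subseteq> D) \<and> T - 1 / real (Suc n) < ?\<nu> G" for n
  proof -
    have "T - 1 / real (Suc n) < T" by simp
    then show ?thesis unfolding T_def by (subst (asm) less_cSUP_iff[OF ne bdd]) auto
  qed
  then obtain G where G: "\<And>n. negative_set (G n)" "\<And>n. G n \<subseteq> D" "\<And>n. T - 1 / real (Suc n) < ?\<nu> (G n)"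
    by metis
  define U where "U n = (\<Union>i\<le>n. G i)" for n
  have negU: "negative_set (U n)" for n
  proof (induction n)
    case (Suc n)
    have "U (Suc n) = U n \<union> G (Suc n)" unfolding U_def by (auto simp: atMost_Suc)
    then show ?case using negative_set_Un[OF Suc G(1)] by simp
  qed (simp add: U_def G(1))
  have "incseq U" unfolding U_def incseq_def by (auto intro: order_trans)
  then have negV: "negative_set (\<Union>n. U n)" using negU by (rule negative_set_UN_incseq)
  have VD: "(\<Union>n. U n) \<subseteq> D" unfolding U_def using G(2) by auto
  have "T \<le> ?\<nu> (\<Union>n. U n)"
  proof (rule field_le_epsilon)
    fix e :: real assume "e > 0"
    then obtain n :: nat where n: "1 / real (Suc n) < e" by (rule nat_approx_posE)
    have "?\<nu> (G n) \<le> ?\<nu> (\<Union>n. U n)"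
      using negV unfolding negative_set_def U_def by (intro finite_measure_mono) auto
    then show "T \<le> ?\<nu> (\<Union>n. U n) + e" using G(3)[of n] n by simp
  qed
  moreover have "?\<nu> G \<le> T" if "negative_set G" "G \<subseteq> D" for G
    unfolding T_def using that by (intro cSUP_upper bdd) auto
  ultimately have "?\<nu> G \<le> ?\<nu> (\<Union>n. U n)" if "negative_set G" "G \<subseteq> D" for G
    using that by fastforce
  then show ?thesis using that[OF negV VD] by blast
qed

lemma positive_small_subset:
  assumes N: "halvable N" and D: "D \<in> sets N" "\<psi> D > 0" and \<epsilon>: "\<epsilon> > 0"
  shows "\<exists>E\<in>sets N. E \<subseteq> D \<and> \<psi> E > 0 \<and> measure N E \<le> \<epsilon>"
proof (rule ccontr)
  assume small_nonpos: "\<not> ?thesis"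
  obtain V where V: "negative_set V" "V \<subseteq> D"
    and max: "\<And>G. negative_set G \<Longrightarrow> G \<subseteq> D \<Longrightarrow> measure N G \<le> measure N V"
    using negative_subset_max[OF D(1)] by blast
  have Vs: "V \<in> sets N" using V(1) unfolding negative_set_def by simp
  have "measure N (D - V) = 0"
  proof (rule ccontr)
    assume "measure N (D - V) \<noteq> 0"
    then have "0 < measure N (D - V)" using measure_nonneg[of N "D - V"] by linarith
    then obtain F where F: "F \<in> sets N" "F \<subseteq> D - V" "0 < measure N F" "measure N F \<le> \<epsilon>"
      using halvable_small_subset[OF N _ _ \<epsilon>, of "D - V"] D Vs by blast
    have "\<psi> G \<le> 0" if "G \<in> sets N" "G \<subseteq> F" for G
    proof -
      have "measure N G \<le> \<epsilon>" using finite_measure_mono[OF that(2) F(1)] F(4) by simp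
      then show ?thesis using small_nonpos that F(2) by force
    qed
    then have "negative_set F" unfolding negative_set_def using F(1) by blast
    then have "measure N (V \<union> F) \<le> measure N V" using max negative_set_Un[OF V(1)] V(2) F(2) by blast
    moreover have "measure N (V \<union> F) = measure N V + measure N F"
      using F Vs by (intro finite_measure_Union) auto
    ultimately show False using F(3) by simp
  qed
  then have "\<psi> (D - V) = 0" using dominated[of "D - V"] D Vs by auto
  moreover have "\<psi> V \<le> 0" using V(1) unfolding negative_set_def by auto
  ultimately show False using additive_Int_Diff[OF D(1) Vs] V(2) D(2) by (simp add: Int_absorb1)
qed

lemma positive_small_set_outside:
  assumes N: "halvable N" and U: "U \<in> sets N" "K * measure N U < \<psi> (space N)" and \<epsilon>: "\<epsilon> > 0"
  shows "\<exists>E\<in>sets N. E \<inter> U = {} \<and> \<psi> E > 0 \<and> measure N E \<le> \<epsilon>"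
proof -
  have "\<psi> (space N) = \<psi> U + \<psi> (space N - U)"
    using additive_Int_Diff[OF sets.top U(1)] sets.sets_into_space[OF U(1)] by (simp add: Int_absorb1)
  then have "\<psi> (space N - U) > 0" using dominated[OF U(1)] U(2) by linarith
  then show ?thesis using positive_small_subset[OF N _ _ \<epsilon>, of "space N - U"] U(1) by blast
qed

end

lemma disjoint_positive_small_sets:
  fixes \<psi> :: "nat \<Rightarrow> 'a set \<Rightarrow> real" and K :: "nat \<Rightarrow> real"
  assumes N: "finite_measure N" "halvable N"
    and \<psi>: "\<And>i. i < n \<Longrightarrow> dominated_additive N (\<psi> i) (K i)"
    and pos: "\<And>i. i < n \<Longrightarrow> \<psi> i (space N) > 0" and \<epsilon>: "\<epsilon> > 0"
  obtains E where "\<forall>i<n. E i \<in> sets N \<and> measure N (E i) \<le> \<epsilon> \<and> \<psi> i (E i) > 0"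
    "\<forall>i<n. \<forall>j<n. i \<noteq> j \<longrightarrow> E i \<inter> E j = {}"
proof -
  interpret N: finite_measure N by (rule N(1))
  have K: "K i \<ge> 0" if "i < n" for i by (rule dominated_additive.K_nonneg[OF \<psi>[OF that]])
  define e where "e = Min (insert \<epsilon> ((\<lambda>i. \<psi> i (space N) / (real n * K i + 1)) ` {..<n}))"
  have e: "e > 0" "e \<le> \<epsilon>" using \<epsilon> pos K unfolding e_def by (auto intro!: divide_pos_pos add_nonneg_pos)
  have margin: "real n * K i * e < \<psi> i (space N)" if i: "i < n" for i
  proof -
    have "e \<le> \<psi> i (space N) / (real n * K i + 1)" unfolding e_def using i by (intro Min_le) auto
    moreover have "real n * K i + 1 > 0" using K[OF i] by (simp add: add_nonneg_pos)
    ultimately have "e * (real n * K i + 1) \<le> \<psi> i (space N)" by (simp add: pos_le_divide_eq)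
    then show ?thesis using e(1) by (simp add: algebra_simps)
  qed
  have "\<exists>E. (\<forall>i<m. E i \<in> sets N \<and> measure N (E i) \<le> e \<and> \<psi> i (E i) > 0)
             \<and> (\<forall>i<m. \<forall>j<m. i \<noteq> j \<longrightarrow> E i \<inter> E j = {})" if "m \<le> n" for m
    using that
  proof (induction m)
    case (Suc m)
    then obtain E where E: "\<forall>i<m. E i \<in> sets N \<and> measure N (E i) \<le> e \<and> \<psi> i (E i) > 0"
      and disj: "\<forall>i<m. \<forall>j<m. i \<noteq> j \<longrightarrow> E i \<inter> E j = {}" by auto
    interpret dominated_additive N "\<psi> m" "K m" using \<psi> Suc.prems by simp
    define U where "U = (\<Union>j<m. E j)"
    have U: "U \<in> sets N" unfolding U_def using E by auto
    have "measure N U \<le> (\<Sum>j<m. measure N (E j))"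
      unfolding U_def using E by (intro N.finite_measure_subadditive_finite) auto
    also have "\<dots> \<le> (\<Sum>j<m. e)" using E by (intro sum_mono) auto
    also have "\<dots> \<le> real n * e" using Suc.prems e(1) by (simp add: mult_right_mono)
    finally have "K m * measure N U \<le> K m * (real n * e)" using K_nonneg by (rule mult_left_mono)
    also have "\<dots> < \<psi> m (space N)" using margin[of m] Suc.prems by (simp add: mult.assoc mult.left_commute)
    finally have "K m * measure N U < \<psi> m (space N)" .
    then obtain E' where E': "E' \<in> sets N" "E' \<inter> U = {}" "\<psi> m E' > 0" "measure N E' \<le> e"
      using positive_small_set_outside[OF N(2) U _ e(1)] by blast
    have "E' \<inter> E j = {}" if "j < m" for j using E'(2) that unfolding U_def by auto
    then show ?case using E E' disj by (intro exI[of _ "E(m := E')"]) (auto simp: less_Suc_eq)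
  qed simp
  then obtain E where E: "\<forall>i<n. E i \<in> sets N \<and> measure N (E i) \<le> e \<and> \<psi> i (E i) > 0"
    "\<forall>i<n. \<forall>j<n. i \<noteq> j \<longrightarrow> E i \<inter> E j = {}" by blast
  show ?thesis
  proof (rule that)
    show "\<forall>i<n. E i \<in> sets N \<and> measure N (E i) \<le> \<epsilon> \<and> \<psi> i (E i) > 0"
    proof (intro allI impI)
      fix i assume "i < n"
      then have "E i \<in> sets N" "measure N (E i) \<le> e" "\<psi> i (E i) > 0" using E(1) by auto
      then show "E i \<in> sets N \<and> measure N (E i) \<le> \<epsilon> \<and> \<psi> i (E i) > 0" using e(2) by simp
    qed
  qed (rule E(2))
qed

section \<open>Densities with respect to a measure without finite atoms\<close>

lemma emeasure_density_integrable:
  fixes g :: "'a \<Rightarrow> real"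
  assumes g: "integrable M g" "\<And>x. 0 \<le> g x" and E: "E \<in> sets M"
  shows "emeasure (density M g) E = ennreal (\<integral>x. g x * indicator E x \<partial>M)"
proof -
  have "emeasure (density M g) E = (\<integral>\<^sup>+ x. ennreal (g x) * indicator E x \<partial>M)"
    using g E by (intro emeasure_density) auto
  also have "\<dots> = (\<integral>\<^sup>+ x. ennreal (g x * indicator E x) \<partial>M)"
    by (intro nn_integral_cong) (auto split: split_indicator)
  also have "\<dots> = ennreal (\<integral>x. g x * indicator E x \<partial>M)"
    using integrable_mult_indicator[OF E g(1)] g(2)
    by (intro nn_integral_eq_integral) (auto simp: mult.commute)
  finally show ?thesis .
qed

lemma finite_measure_density_integrable:
  fixes g :: "'a \<Rightarrow> real"
  assumes "integrable M g" "\<And>x. 0 \<le> g x"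
  shows "finite_measure (density M g)"
  by (rule finite_measureI) (simp add: emeasure_density_integrable[OF assms sets.top])

lemma measure_density_integrable:
  fixes g :: "'a \<Rightarrow> real"
  assumes g: "integrable M g" "\<And>x. 0 \<le> g x" and E: "E \<in> sets M"
  shows "measure (density M g) E = (\<integral>x. g x * indicator E x \<partial>M)"
  using emeasure_density_integrable[OF assms] g(2)
  by (simp add: measure_def integral_nonneg_AE)

lemma density_level_set_positive:
  fixes g :: "'a \<Rightarrow> real"
  assumes g: "integrable M g" "\<And>x. 0 \<le> g x" and E: "E \<in> sets M"
    and pos: "0 < measure (density M g) E"
  obtains c where "c > 0" "0 < measure (density M g) {x\<in>E. c < g x}"
proof -
  have [measurable]: "g \<in> borel_measurable M" using g by auto
  have level: "{x\<in>E. c < g x} = E \<inter> {x\<in>space M. c < g x}" for c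
    using sets.sets_into_space[OF E] by auto
  have level_sets: "{x\<in>E. c < g x} \<in> sets M" for c
    unfolding level using E by measurable
  have int: "integrable M (\<lambda>x. g x * indicator A x)" if "A \<in> sets M" for A
    using integrable_mult_indicator[OF that g(1)] by (simp add: mult.commute)
  show ?thesis
  proof (rule ccontr)
    assume "\<not> thesis"
    have "measure (density M g) {x\<in>E. 1 / real (Suc k) < g x} = 0" for k
    proof -
      have "0 < 1 / real (Suc k)" by simp
      then have "\<not> 0 < measure (density M g) {x\<in>E. 1 / real (Suc k) < g x}"
        using that \<open>\<not> thesis\<close> by blast
      then show ?thesis using measure_nonneg[of "density M g"] by (simp add: not_less order.antisym)
    qed
    then have "AE x in M. g x * indicator {x\<in>E. 1 / real (Suc k) < g x} x = 0" for k
      using measure_density_integrable[OF g level_sets] int[OF level_sets] g(2)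
      by (subst integral_nonneg_eq_0_iff_AE[symmetric]) auto
    then have "AE x in M. \<forall>k. g x * indicator {x\<in>E. 1 / real (Suc k) < g x} x = 0"
      unfolding AE_all_countable by blast
    then have "AE x in M. g x * indicator E x = 0"
    proof (rule AE_mp, intro AE_I2 impI)
      fix x assume zero: "\<forall>k. g x * indicator {x\<in>E. 1 / real (Suc k) < g x} x = 0"
      show "g x * indicator E x = 0"
      proof (rule ccontr)
        assume "g x * indicator E x \<noteq> 0"
        then have x: "x \<in> E" "0 < g x" using g(2)[of x] by (cases "x \<in> E", auto)+
        from x(2) obtain k where "1 / real (Suc k) < g x" by (rule nat_approx_posE)
        then show False using zero[rule_format, of k] x by simp
      qed
    qed
    then have "(\<integral>x. g x * indicator E x \<partial>M) = (\<integral>x. 0 \<partial>M)"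
      using borel_measurable_integrable[OF int[OF E]] by (intro integral_cong_AE) auto
    then have "measure (density M g) E = 0" unfolding measure_density_integrable[OF g E] by simp
    then show False using pos by simp
  qed
qed

lemma emeasure_le_density_level_set:
  fixes g :: "'a \<Rightarrow> real"
  assumes g: "g \<in> borel_measurable M" "\<And>x. 0 \<le> g x" and c: "c > 0"
    and B: "B \<in> sets M" "\<And>x. x \<in> B \<Longrightarrow> c < g x"
  shows "emeasure M B \<le> ennreal (1 / c) * emeasure (density M g) B"
proof -
  have "emeasure M B = (\<integral>\<^sup>+ x. indicator B x \<partial>M)" using B by simp
  also have "\<dots> \<le> (\<integral>\<^sup>+ x. ennreal (1 / c) * (ennreal (g x) * indicator B x) \<partial>M)"
  proof (rule nn_integral_mono)
    fix x
    show "indicator B x \<le> ennreal (1 / c) * (ennreal (g x) * indicator B x)"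
    proof (cases "x \<in> B")
      case True
      have "1 \<le> 1 / c * g x" using less_imp_le[OF B(2)[OF True]] c by (simp add: field_simps)
      then have "ennreal 1 \<le> ennreal (1 / c * g x)" by (rule ennreal_leI)
      also have "\<dots> = ennreal (1 / c) * ennreal (g x)" by (rule ennreal_mult) (use c g(2) in auto)
      finally show ?thesis using True by simp
    qed simp
  qed
  also have "\<dots> = ennreal (1 / c) * (\<integral>\<^sup>+ x. ennreal (g x) * indicator B x \<partial>M)"
    using B g by (intro nn_integral_cmult) auto
  also have "(\<integral>\<^sup>+ x. ennreal (g x) * indicator B x \<partial>M) = emeasure (density M g) B"
    using B g by (intro emeasure_density[symmetric]) auto
  finally show ?thesis .
qed

lemma not_halved_measure_atom:
  assumes N: "finite_measure N" and E: "E \<in> sets N" and B: "B \<in> sets N" "B \<subseteq> E"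
    and not_halved: "\<not> (\<exists>F\<in>sets N. F \<subseteq> E \<and> 0 < measure N F \<and> measure N F \<le> measure N E / 2)"
  shows "measure N B = 0 \<or> measure N (E - B) = 0"
proof (rule ccontr)
  interpret N: finite_measure N by (rule N)
  assume "\<not> ?thesis"
  then have pos: "measure N B > 0" "measure N (E - B) > 0"
    using measure_nonneg[of N] by (auto simp: order_less_le)
  have EB: "E - B \<in> sets N" "E - B \<subseteq> E" using B E by auto
  have "measure N E = measure N B + measure N (E - B)"
    using B E N.finite_measure_Union[of B "E - B"] by (simp add: Un_absorb1)
  then have "measure N B \<le> measure N E / 2 \<or> measure N (E - B) \<le> measure N E / 2" by linarith
  then show False using not_halved B EB pos by blast
qed

text \<open>A set \<open>E\<close> that cannot be halved is an atom of \<open>g \<mu>\<close>; where \<open>g > c\<close> on it, \<open>\<mu> \<le> (g \<mu>)/c\<close>,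
  so that part of \<open>E\<close> is an atom of \<open>\<mu>\<close> of finite measure.\<close>

lemma halvable_density:
  fixes g :: "'a \<Rightarrow> real"
  assumes g: "integrable M g" "\<And>x. 0 \<le> g x"
    and noatom: "\<not> (\<exists>A. is_atom M A \<and> emeasure M A < \<infinity>)"
  shows "halvable (density M g)"
  unfolding halvable_def sets_density
proof (intro ballI impI, rule ccontr)
  let ?N = "density M g"
  interpret N: finite_measure ?N by (rule finite_measure_density_integrable[OF g])
  fix E assume E: "E \<in> sets M" "0 < measure ?N E"
    and not_halved: "\<not> (\<exists>F\<in>sets M. F \<subseteq> E \<and> 0 < measure ?N F \<and> measure ?N F \<le> measure ?N E / 2)"
  have gm [measurable]: "g \<in> borel_measurable M" using g by auto
  have E_atom: "measure ?N B = 0 \<or> measure ?N (E - B) = 0" if "B \<in> sets M" "B \<subseteq> E" for B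
    using not_halved_measure_atom[OF N.finite_measure_axioms, of E B] E(1) not_halved that by simp
  obtain c where c: "c > 0" and A_pos: "0 < measure ?N {x\<in>E. c < g x}"
    using density_level_set_positive[OF g E] by blast
  define A where "A = {x\<in>E. c < g x}"
  have "A = E \<inter> {x\<in>space M. c < g x}" unfolding A_def using sets.sets_into_space[OF E(1)] by auto
  then have A: "A \<in> sets M" "A \<subseteq> E" using E(1) by auto
  have le: "emeasure M B \<le> ennreal (1 / c) * ennreal (measure ?N B)" if B: "B \<in> sets M" "B \<subseteq> A" for B
    using emeasure_le_density_level_set[OF gm g(2) c B(1)] B N.emeasure_eq_measure
    unfolding A_def by auto
  have "is_atom M A \<and> emeasure M A < \<infinity>"
    unfolding is_atom_def
  proof (intro conjI ballI impI)
    show "A \<in> sets M" by (rule A(1))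
    show "emeasure M A < \<infinity>" using le[OF A(1) order_refl]
      by (metis ennreal_mult_less_top ennreal_less_top infinity_ennreal_def order.strict_trans1)
    show "0 < emeasure M A"
    proof (rule ccontr)
      assume "\<not> 0 < emeasure M A"
      then have "emeasure ?N A = 0"
        using A emeasure_density[of g M A] gm by (auto intro: nn_integral_null_set simp: null_sets_def)
      then show False using A_pos N.emeasure_eq_measure[of A] unfolding A_def by simp
    qed
    fix B assume B: "B \<in> sets M" "B \<subseteq> A"
    have "measure ?N (A - B) \<le> measure ?N (E - B)"
      using A B E by (intro N.finite_measure_mono) auto
    then have "measure ?N (E - B) = 0 \<Longrightarrow> measure ?N (A - B) = 0"
      using measure_nonneg[of ?N "A - B"] by linarith
    then have "measure ?N B = 0 \<or> measure ?N (A - B) = 0"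
      using E_atom[OF B(1)] B(2) A(2) by blast
    then show "emeasure M B = 0 \<or> emeasure M (A - B) = 0"
      using le[OF B] le[of "A - B"] A B by auto
  qed
  then show False using noatom by blast
qed

section \<open>Without atoms of finite measure every ccs contains far points\<close>

definition slice_witness ::
    "'a measure \<Rightarrow> ('a \<Rightarrow> real) set \<Rightarrow> ('a \<Rightarrow> real) \<Rightarrow> ('a set \<Rightarrow> real) \<Rightarrow> real \<Rightarrow> bool" where
  "slice_witness M S w \<psi> K \<longleftrightarrow> w \<in> L1set M \<and> K \<ge> 0 \<and> \<psi> (space M) > 0
     \<and> (\<forall>E\<in>sets M. \<forall>F\<in>sets M. E \<inter> F = {} \<longrightarrow> \<psi> (E \<union> F) = \<psi> E + \<psi> F)
     \<and> (\<forall>E\<in>sets M. \<bar>\<psi> E\<bar> \<le> K * (\<integral>x. indicator E x * \<bar>w x\<bar> \<partial>M))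
     \<and> (\<forall>E\<in>sets M. \<psi> E > 0 \<longrightarrow> (\<exists>v\<in>S. L1norm M v = 1 \<and> (\<forall>x. x \<notin> E \<longrightarrow> v x = 0)))"

text \<open>For \<open>w\<^sub>0\<close> deep inside the slice, \<open>\<psi> E = \<phi>(1\<^sub>E w\<^sub>0) - a \<parallel>1\<^sub>E w\<^sub>0\<parallel>\<close> is positive exactly when
  the normalized restriction of \<open>w\<^sub>0\<close> to \<open>E\<close> still lies in the slice.\<close>

lemma slice_witness_dual_norm_pos:
  assumes \<phi>: "L1_functional M \<phi>" and pos: "L1_dual_norm M \<phi> > 0" and \<delta>: "\<delta> > 0"
  shows "\<exists>w \<psi> K. slice_witness M (L1_slice M \<phi> \<delta>) w \<psi> K"
proof -
  obtain C where C: "C \<ge> 0" "\<And>f. f \<in> L1set M \<Longrightarrow> \<bar>\<phi> f\<bar> \<le> C * L1norm M f"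
    using L1_functional_boundedE[OF \<phi>] by blast
  define a where "a = max (L1_dual_norm M \<phi> - \<delta>) 0"
  have a: "a \<ge> 0" "a < L1_dual_norm M \<phi>" "a \<ge> L1_dual_norm M \<phi> - \<delta>" using pos \<delta> unfolding a_def by auto
  obtain w where w: "w \<in> L1set M" "L1norm M w \<le> 1" "\<phi> w > a"
    using L1_dual_norm_approx[OF \<phi> a(2)] unfolding L1ball_def by blast
  let ?r = "\<lambda>E. \<integral>x. indicator E x * \<bar>w x\<bar> \<partial>M"
  define \<psi> where "\<psi> E = \<phi> (\<lambda>x. indicator E x * w x) - a * ?r E" for E
  have bound: "\<bar>\<phi> (\<lambda>x. indicator E x * w x)\<bar> \<le> C * ?r E" if "E \<in> sets M" for E
    using C(2)[OF L1set_indicator_mult[OF w(1) that]] unfolding L1norm_indicator_mult .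
  have "slice_witness M (L1_slice M \<phi> \<delta>) w \<psi> (C + a)"
    unfolding slice_witness_def
  proof (intro conjI ballI impI)
    show "w \<in> L1set M" "C + a \<ge> 0" using w C a by auto
    have "\<phi> (\<lambda>x. indicator (space M) x * w x) = \<phi> w"
      by (rule L1_functional_cong[OF \<phi> L1set_indicator_mult[OF w(1) sets.top] w(1)
            L1norm_indicator_space_mult_diff])
    moreover have "a * L1norm M w \<le> a" using a w(2) by (simp add: mult_left_le)
    ultimately show "\<psi> (space M) > 0"
      unfolding \<psi>_def integral_indicator_space_mult_abs using w(3) by simp
    fix E assume E: "E \<in> sets M"
    show "\<psi> (E \<union> F) = \<psi> E + \<psi> F" if "F \<in> sets M" "E \<inter> F = {}" for F
      unfolding \<psi>_def indicator_Un_mult[OF that(2), of w]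
      using L1_functional_add[OF \<phi> L1set_indicator_mult[OF w(1) E] L1set_indicator_mult[OF w(1) that(1)]]
        integral_indicator_Un_mult_abs[OF w(1) E that] by (simp add: algebra_simps)
    have r0: "0 \<le> ?r E" by (rule integral_indicator_mult_abs_nonneg)
    have "\<bar>\<psi> E\<bar> \<le> \<bar>\<phi> (\<lambda>x. indicator E x * w x)\<bar> + \<bar>a * ?r E\<bar>"
      unfolding \<psi>_def by (rule abs_triangle_ineq4)
    also have "\<dots> \<le> C * ?r E + a * ?r E" using bound[OF E] r0 a(1) by (simp add: abs_mult)
    finally show "\<bar>\<psi> E\<bar> \<le> (C + a) * ?r E" by (simp add: algebra_simps)
    assume pos: "\<psi> E > 0"
    then have r: "?r E > 0" using bound[OF E] r0 unfolding \<psi>_def by (smt (verit) mult_eq_0_iff)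
    then have above: "a < \<phi> (\<lambda>x. indicator E x * w x) / ?r E"
      using pos unfolding \<psi>_def by (simp add: pos_less_divide_eq)
    note v = normalized_restriction[OF w(1) E r]
    have "(\<lambda>x. 1 / ?r E * (indicator E x * w x)) \<in> L1_slice M \<phi> \<delta>"
      using above v(4) v(5)[OF \<phi>] a(3) unfolding L1_slice_def by auto
    then show "\<exists>v\<in>L1_slice M \<phi> \<delta>. L1norm M v = 1 \<and> (\<forall>x. x \<notin> E \<longrightarrow> v x = 0)" using v(2,3) by blast
  qed
  then show ?thesis by blast
qed

text \<open>A functional of norm zero vanishes, so its slices are the whole ball.\<close>

lemma slice_witness_dual_norm_zero:
  assumes \<phi>: "L1_functional M \<phi>" and zero: "L1_dual_norm M \<phi> = 0" and \<delta>: "\<delta> > 0"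
    and w: "w \<in> L1set M" "L1norm M w > 0"
  shows "slice_witness M (L1_slice M \<phi> \<delta>) w (\<lambda>E. \<integral>x. indicator E x * \<bar>w x\<bar> \<partial>M) 1"
  unfolding slice_witness_def
proof (intro conjI ballI impI)
  let ?r = "\<lambda>E. \<integral>x. indicator E x * \<bar>w x\<bar> \<partial>M"
  show "?r (space M) > 0" unfolding integral_indicator_space_mult_abs by (rule w(2))
  fix E assume E: "E \<in> sets M"
  show "?r (E \<union> F) = ?r E + ?r F" if "F \<in> sets M" "E \<inter> F = {}" for F
    by (rule integral_indicator_Un_mult_abs[OF w(1) E that])
  assume pos: "?r E > 0"
  note v = normalized_restriction[OF w(1) E pos]
  have "\<phi> (\<lambda>x. 1 / ?r E * (indicator E x * w x)) = 0"
    using L1_functional_le_dual_norm[OF \<phi> v(1)] zero by simp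
  then have "(\<lambda>x. 1 / ?r E * (indicator E x * w x)) \<in> L1_slice M \<phi> \<delta>"
    using v(4) \<delta> zero unfolding L1_slice_def by auto
  then show "\<exists>v\<in>L1_slice M \<phi> \<delta>. L1norm M v = 1 \<and> (\<forall>x. x \<notin> E \<longrightarrow> v x = 0)" using v(2,3) by blast
qed (use w integral_indicator_mult_abs_nonneg in auto)

lemma slice_witness_exists:
  assumes S: "is_L1_slice M S" and nz: "\<exists>w\<in>L1set M. L1norm M w > 0"
  shows "\<exists>w \<psi> K. slice_witness M S w \<psi> K"
proof -
  obtain \<phi> \<delta> where \<phi>: "L1_functional M \<phi>" and \<delta>: "\<delta> > 0" and S_eq: "S = L1_slice M \<phi> \<delta>"
    using S unfolding is_L1_slice_def by blast
  show ?thesis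
  proof (cases "L1_dual_norm M \<phi> > 0")
    case True
    then show ?thesis unfolding S_eq by (rule slice_witness_dual_norm_pos[OF \<phi> _ \<delta>])
  next
    case False
    then have "L1_dual_norm M \<phi> = 0" using L1_dual_norm_nonneg[OF \<phi>] by simp
    then show ?thesis using slice_witness_dual_norm_zero[OF \<phi> _ \<delta>] nz unfolding S_eq by blast
  qed
qed

lemma integral_indicator_mult_abs_le_density:
  fixes g h :: "'a \<Rightarrow> real"
  assumes g: "integrable M g" "\<And>x. 0 \<le> g x" and h: "h \<in> L1set M" "\<And>x. \<bar>h x\<bar> \<le> g x"
    and E: "E \<in> sets M"
  shows "(\<integral>x. indicator E x * \<bar>h x\<bar> \<partial>M) \<le> measure (density M g) E"
  unfolding measure_density_integrable[OF g E]
proof (rule integral_mono)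
  show "integrable M (\<lambda>x. g x * indicator E x)"
    using integrable_mult_indicator[OF E g(1)] by (simp add: mult.commute)
  show "indicator E x * \<bar>h x\<bar> \<le> g x * indicator E x" for x
    using h(2)[of x] by (auto simp: indicator_def)
qed (rule integrable_indicator_mult_abs[OF h(1) E])

lemma slices_disjoint_supports:
  fixes n :: nat
  assumes noatom: "\<not> (\<exists>A. is_atom M A \<and> emeasure M A < \<infinity>)"
    and nz: "\<exists>w\<in>L1set M. L1norm M w > 0"
    and S: "\<And>i. i < n \<Longrightarrow> is_L1_slice M (S i)" and z: "z \<in> L1set M" and \<epsilon>: "\<epsilon> > 0"
  obtains v E where "\<forall>i<n. v i \<in> S i \<and> L1norm M (v i) = 1 \<and> E i \<in> sets M
      \<and> (\<forall>x. x \<notin> E i \<longrightarrow> v i x = 0) \<and> (\<integral>x. indicator (E i) x * \<bar>z x\<bar> \<partial>M) \<le> \<epsilon>"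
    "\<forall>i<n. \<forall>j<n. i \<noteq> j \<longrightarrow> E i \<inter> E j = {}"
proof -
  have "\<forall>i. \<exists>w \<psi> K. i < n \<longrightarrow> slice_witness M (S i) w \<psi> K"
    using slice_witness_exists[OF S nz] by blast
  then obtain W \<Psi> K where "\<And>i. i < n \<Longrightarrow> slice_witness M (S i) (W i) (\<Psi> i) (K i)" by metis
  then have W: "\<And>i. i < n \<Longrightarrow> W i \<in> L1set M" and K: "\<And>i. i < n \<Longrightarrow> K i \<ge> 0"
    and \<Psi>_pos: "\<And>i. i < n \<Longrightarrow> \<Psi> i (space M) > 0"
    and \<Psi>_add: "\<And>i. i < n \<Longrightarrow> \<forall>E\<in>sets M. \<forall>F\<in>sets M. E \<inter> F = {} \<longrightarrow> \<Psi> i (E \<union> F) = \<Psi> i E + \<Psi> i F"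
    and \<Psi>_dom: "\<And>i. i < n \<Longrightarrow> \<forall>E\<in>sets M. \<bar>\<Psi> i E\<bar> \<le> K i * (\<integral>x. indicator E x * \<bar>W i x\<bar> \<partial>M)"
    and \<Psi>_slice: "\<And>i. i < n \<Longrightarrow> \<forall>E\<in>sets M. \<Psi> i E > 0 \<longrightarrow>
                    (\<exists>v\<in>S i. L1norm M v = 1 \<and> (\<forall>x. x \<notin> E \<longrightarrow> v x = 0))"
    unfolding slice_witness_def by blast+
  define g where "g x = \<bar>z x\<bar> + (\<Sum>i<n. \<bar>W i x\<bar>)" for x
  have g: "integrable M g" "\<And>x. 0 \<le> g x"
    unfolding g_def using z W unfolding L1set_def by (auto intro!: sum_nonneg Bochner_Integration.integrable_add Bochner_Integration.integrable_sum)
  let ?N = "density M g"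
  interpret N: finite_measure ?N by (rule finite_measure_density_integrable[OF g])
  have W_le_g: "\<bar>W i x\<bar> \<le> g x" if "i < n" for i x
  proof -
    have "\<bar>W i x\<bar> \<le> (\<Sum>j<n. \<bar>W j x\<bar>)" using that by (intro member_le_sum) auto
    then show ?thesis unfolding g_def using abs_ge_zero[of "z x"] by linarith
  qed
  have dom: "dominated_additive ?N (\<Psi> i) (K i)" if i: "i < n" for i
  proof
    show "\<bar>\<Psi> i E\<bar> \<le> K i * measure ?N E" if "E \<in> sets ?N" for E
      using \<Psi>_dom[OF i] that mult_left_mono[OF integral_indicator_mult_abs_le_density[OF g W[OF i]
            W_le_g[OF i]] K[OF i]] by fastforce
  qed (use K \<Psi>_add i in auto)
  have pos: "\<Psi> i (space ?N) > 0" if "i < n" for i using \<Psi>_pos[OF that] by simp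
  obtain E where E: "\<forall>i<n. E i \<in> sets M \<and> measure ?N (E i) \<le> \<epsilon> \<and> \<Psi> i (E i) > 0"
    and disj: "\<forall>i<n. \<forall>j<n. i \<noteq> j \<longrightarrow> E i \<inter> E j = {}"
    using disjoint_positive_small_sets[where n=n and \<psi>=\<Psi> and K=K,
        OF N.finite_measure_axioms halvable_density[OF g noatom] dom pos \<epsilon>]
    by auto
  have "\<forall>i. \<exists>v. i < n \<longrightarrow> v \<in> S i \<and> L1norm M v = 1 \<and> (\<forall>x. x \<notin> E i \<longrightarrow> v x = 0)"
    using \<Psi>_slice E by blast
  then obtain v where v: "\<And>i. i < n \<Longrightarrow> v i \<in> S i \<and> L1norm M (v i) = 1 \<and> (\<forall>x. x \<notin> E i \<longrightarrow> v i x = 0)"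
    by metis
  have z_le_g: "\<bar>z x\<bar> \<le> g x" for x unfolding g_def by (simp add: sum_nonneg)
  have "(\<integral>x. indicator (E i) x * \<bar>z x\<bar> \<partial>M) \<le> \<epsilon>" if "i < n" for i
    using integral_indicator_mult_abs_le_density[OF g z z_le_g, of "E i"] E that by force
  then show ?thesis using that[of v E] v E disj by blast
qed

lemma abs_sum_disjoint_supports:
  fixes v :: "nat \<Rightarrow> 'a \<Rightarrow> real"
  assumes lam: "\<And>i. i < n \<Longrightarrow> 0 \<le> lam i" and supp: "\<And>i. i < n \<Longrightarrow> x \<notin> E i \<Longrightarrow> v i x = 0"
    and disj: "\<And>i j. i < n \<Longrightarrow> j < n \<Longrightarrow> i \<noteq> j \<Longrightarrow> E i \<inter> E j = {}"
  shows "\<bar>\<Sum>i<n. lam i * v i x\<bar> = (\<Sum>i<n. lam i * \<bar>v i x\<bar>)"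
proof (cases "\<exists>j<n. x \<in> E j")
  case True
  then obtain j where j: "j < n" "x \<in> E j" by blast
  have others: "v i x = 0" if "i \<in> {..<n} - {j}" for i using supp disj j that by blast
  have single: "(\<Sum>i<n. f i) = f j" if "\<And>i. i \<in> {..<n} - {j} \<Longrightarrow> f i = 0" for f :: "nat \<Rightarrow> real"
    using sum.remove[of "{..<n}" j f] sum.neutral[of "{..<n} - {j}" f] j(1) that by simp
  have "(\<Sum>i<n. lam i * v i x) = lam j * v j x" "(\<Sum>i<n. lam i * \<bar>v i x\<bar>) = lam j * \<bar>v j x\<bar>"
    using others by (intro single; simp)+
  then show ?thesis using lam[OF j(1)] by (simp add: abs_mult)
qed (use supp in simp)

lemma L1norm_sum_disjoint_supports:
  fixes v :: "nat \<Rightarrow> 'a \<Rightarrow> real"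
  assumes lam: "\<And>i. i < n \<Longrightarrow> 0 \<le> lam i" and v: "\<And>i. i < n \<Longrightarrow> v i \<in> L1set M"
    and supp: "\<And>i x. i < n \<Longrightarrow> x \<notin> E i \<Longrightarrow> v i x = 0"
    and disj: "\<And>i j. i < n \<Longrightarrow> j < n \<Longrightarrow> i \<noteq> j \<Longrightarrow> E i \<inter> E j = {}"
  shows "L1norm M (\<lambda>x. \<Sum>i<n. lam i * v i x) = (\<Sum>i<n. lam i * L1norm M (v i))"
proof -
  have "L1norm M (\<lambda>x. \<Sum>i<n. lam i * v i x) = (\<integral>x. (\<Sum>i<n. lam i * \<bar>v i x\<bar>) \<partial>M)"
    unfolding L1norm_def
    using abs_sum_disjoint_supports[where n=n and lam=lam and v=v and E=E, OF lam supp disj] by simp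
  also have "\<dots> = (\<Sum>i<n. lam i * L1norm M (v i))"
    unfolding L1norm_def using v unfolding L1set_def by (simp add: integral_sum)
  finally show ?thesis .
qed

lemma L1norm_diff_ge:
  fixes u v c :: "'a \<Rightarrow> real"
  assumes u: "u \<in> L1set M" and v: "v \<in> L1set M" and c0: "\<And>x. c x \<ge> 0"
    and cu: "integrable M (\<lambda>x. c x * \<bar>u x\<bar>)" and c1: "\<And>x. v x \<noteq> 0 \<Longrightarrow> c x \<ge> 1"
  shows "L1norm M (\<lambda>x. u x - v x) \<ge> L1norm M u + L1norm M v - 2 * (\<integral>x. c x * \<bar>u x\<bar> \<partial>M)"
proof -
  have pointwise: "\<bar>u x\<bar> + \<bar>v x\<bar> - 2 * (c x * \<bar>u x\<bar>) \<le> \<bar>u x - v x\<bar>" for x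
  proof (cases "v x = 0")
    case False
    then have "c x * \<bar>u x\<bar> \<ge> 1 * \<bar>u x\<bar>" using c1 by (intro mult_right_mono) auto
    then show ?thesis by linarith
  qed (use c0[of x] in simp)
  have "(\<integral>x. \<bar>u x\<bar> + \<bar>v x\<bar> - 2 * (c x * \<bar>u x\<bar>) \<partial>M) \<le> (\<integral>x. \<bar>u x - v x\<bar> \<partial>M)"
    by (rule integral_mono) (use cu u v pointwise in \<open>auto simp: L1set_def\<close>)
  then show ?thesis using u v cu unfolding L1norm_def L1set_def by simp
qed

text \<open>The witness is \<open>\<Sum> \<lambda>\<^sub>i v\<^sub>i\<close> for slice points \<open>v\<^sub>i\<close> with disjoint supports on which \<open>z\<close> has
  little mass.\<close>

lemma L1_ccs_far_point:
  assumes noatom: "\<not> (\<exists>A. is_atom M A \<and> emeasure M A < \<infinity>)"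
    and nz: "\<exists>w\<in>L1set M. L1norm M w > 0"
    and C: "is_L1_ccs M C" and z: "z \<in> L1set M" and \<epsilon>: "\<epsilon> > 0"
  shows "\<exists>u\<in>C. L1norm M u = 1 \<and> L1norm M (\<lambda>x. z x - u x) \<ge> L1norm M z + 1 - \<epsilon>"
proof -
  obtain n :: nat and lam S where n: "n \<ge> 1" and lam: "\<And>i. i < n \<Longrightarrow> 0 < lam i"
    and S: "\<And>i. i < n \<Longrightarrow> is_L1_slice M (S i)" and sum_lam: "(\<Sum>i<n. lam i) = 1"
    and C_eq: "C = {(\<lambda>x. \<Sum>i<n. lam i * w i x) | w. \<forall>i<n. w i \<in> S i}"
    by (elim is_L1_ccsE[OF C])
  define e where "e = \<epsilon> / (2 * real n)"
  have e: "e > 0" using \<epsilon> n unfolding e_def by simp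
  obtain v E where vE: "\<forall>i<n. v i \<in> S i \<and> L1norm M (v i) = 1 \<and> E i \<in> sets M
      \<and> (\<forall>x. x \<notin> E i \<longrightarrow> v i x = 0) \<and> (\<integral>x. indicator (E i) x * \<bar>z x\<bar> \<partial>M) \<le> e"
    and disj: "\<forall>i<n. \<forall>j<n. i \<noteq> j \<longrightarrow> E i \<inter> E j = {}"
    using slices_disjoint_supports[where n=n and S=S, OF noatom nz S z e] by blast
  have v: "\<And>i. i < n \<Longrightarrow> v i \<in> S i" "\<And>i. i < n \<Longrightarrow> L1norm M (v i) = 1"
    and E: "\<And>i. i < n \<Longrightarrow> E i \<in> sets M" "\<And>i x. i < n \<Longrightarrow> x \<notin> E i \<Longrightarrow> v i x = 0"
      "\<And>i. i < n \<Longrightarrow> (\<integral>x. indicator (E i) x * \<bar>z x\<bar> \<partial>M) \<le> e"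
      "\<And>i j. i < n \<Longrightarrow> j < n \<Longrightarrow> i \<noteq> j \<Longrightarrow> E i \<inter> E j = {}"
    using vE disj by auto
  define u where "u x = (\<Sum>i<n. lam i * v i x)" for x
  have "u \<in> C" unfolding C_eq u_def using v(1) by blast
  have v_L1: "v i \<in> L1set M" if "i < n" for i
    using v(1)[OF that] S[OF that] unfolding is_L1_slice_def L1_slice_def L1ball_def by auto
  have u_L1: "u \<in> L1set M" unfolding u_def L1set_def using v_L1 unfolding L1set_def by auto
  have u_norm: "L1norm M u = 1"
    using L1norm_sum_disjoint_supports[where n=n and lam=lam and v=v and E=E, OF less_imp_le[OF lam] v_L1 E(2,4)]
      v(2) sum_lam unfolding u_def by simp
  define c where "c x = (\<Sum>i<n. indicator (E i) x * \<bar>z x\<bar>)" for x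
  have c_int: "integrable M c"
    unfolding c_def using E(1) z by (intro Bochner_Integration.integrable_sum integrable_indicator_mult_abs) auto
  have "(\<integral>x. c x \<partial>M) = (\<Sum>i<n. (\<integral>x. indicator (E i) x * \<bar>z x\<bar> \<partial>M))"
    unfolding c_def using E(1) z
    by (intro Bochner_Integration.integral_sum) (auto intro: integrable_indicator_mult_abs)
  also have "\<dots> \<le> (\<Sum>i<n. e)" using E(3) by (intro sum_mono) auto
  finally have c_small: "(\<integral>x. c x \<partial>M) \<le> \<epsilon> / 2" unfolding e_def using n by simp
  have "L1norm M (\<lambda>x. z x - u x)
      \<ge> L1norm M z + L1norm M u - 2 * (\<integral>x. (\<Sum>i<n. indicator (E i) x) * \<bar>z x\<bar> \<partial>M)"
  proof (rule L1norm_diff_ge[OF z u_L1])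
    show "integrable M (\<lambda>x. (\<Sum>i<n. indicator (E i) x) * \<bar>z x\<bar>)"
      using c_int unfolding c_def by (simp add: sum_distrib_right)
    fix x assume "u x \<noteq> 0"
    have "\<not> (\<forall>j<n. v j x = 0)"
    proof
      assume "\<forall>j<n. v j x = 0"
      then have "u x = 0" unfolding u_def by (intro sum.neutral) auto
      with \<open>u x \<noteq> 0\<close> show False by simp
    qed
    then obtain j where j: "j < n" "v j x \<noteq> 0" by blast
    then have "x \<in> E j" using E(2) by blast
    then show "(\<Sum>i<n. indicator (E i) x) \<ge> (1::real)"
      using member_le_sum[of j "{..<n}" "\<lambda>i. indicator (E i) x :: real"] j(1) by auto
  qed (auto intro: sum_nonneg)
  then have "L1norm M (\<lambda>x. z x - u x) \<ge> L1norm M z + 1 - \<epsilon>"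
    using u_norm c_small unfolding c_def by (simp add: sum_distrib_right)
  then show ?thesis using \<open>u \<in> C\<close> u_norm by blast
qed

lemma L1_ccs_daugavet_point_if_no_atom:
  assumes noatom: "\<not> (\<exists>A. is_atom M A \<and> emeasure M A < \<infinity>)"
    and nz: "\<exists>w\<in>L1set M. L1norm M w > 0"
  shows "\<exists>z. L1_ccs_daugavet_point M z"
proof -
  obtain w where w: "w \<in> L1set M" "L1norm M w > 0" using nz by blast
  define z where "z x = (1 / L1norm M w) * w x" for x
  have "z \<in> L1set M" unfolding z_def by (rule L1set_cmult[OF w(1)])
  moreover have "L1norm M z = 1" using L1norm_cmult[of M "1 / L1norm M w" w] w(2) unfolding z_def by simp
  ultimately have z: "z \<in> L1set M" "L1norm M z = 1" by blast+
  have "L1_ccs_daugavet_point M z"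
    unfolding L1_ccs_daugavet_point_def
  proof (intro conjI allI impI)
    show "z \<in> L1sphere M" using z unfolding L1sphere_def by simp
    fix C assume C: "is_L1_ccs M C"
    show "(SUP u\<in>C. L1norm M (\<lambda>x. z x - u x)) = 2"
    proof (rule cSUP_eq_approx[OF L1_ccs_nonempty[OF C]])
      fix u assume "u \<in> C"
      then have "u \<in> L1set M" "L1norm M u \<le> 1" using L1_ccs_subset_ball[OF C] unfolding L1ball_def by auto
      then show "L1norm M (\<lambda>x. z x - u x) \<le> 2" using L1norm_diff_le[OF z(1), of u] z(2) by simp
    next
      fix e :: real assume "e > 0"
      then obtain u where "u \<in> C" "L1norm M z + 1 - e \<le> L1norm M (\<lambda>x. z x - u x)"
        using L1_ccs_far_point[OF noatom nz C z(1)] by blast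
      then show "\<exists>u\<in>C. 2 - e \<le> L1norm M (\<lambda>x. z x - u x)" using z(2) by auto
    qed
  qed
  then show ?thesis by blast
qed

lemma L1_SD2P_if_no_atom:
  assumes noatom: "\<not> (\<exists>A. is_atom M A \<and> emeasure M A < \<infinity>)"
    and nz: "\<exists>w\<in>L1set M. L1norm M w > 0"
  shows "L1_SD2P M"
  unfolding L1_SD2P_def
proof (intro allI impI)
  fix C assume C: "is_L1_ccs M C"
  show "(SUP p\<in>C \<times> C. L1norm M (\<lambda>x. fst p x - snd p x)) = 2"
  proof (rule cSUP_eq_approx)
    show "C \<times> C \<noteq> {}" using L1_ccs_nonempty[OF C] by auto
    fix p assume "p \<in> C \<times> C"
    then have "fst p \<in> L1ball M" "snd p \<in> L1ball M" using L1_ccs_subset_ball[OF C] by auto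
    then show "L1norm M (\<lambda>x. fst p x - snd p x) \<le> 2"
      using L1norm_diff_le[of "fst p" M "snd p"] unfolding L1ball_def by simp
  next
    fix e :: real assume e: "e > 0"
    have "(\<lambda>x. 0) \<in> L1set M" unfolding L1set_def by simp
    then obtain u where u: "u \<in> C" "L1norm M u = 1"
      using L1_ccs_far_point[OF noatom nz C _ e] by blast
    moreover have "u \<in> L1set M" using u(1) L1_ccs_subset_ball[OF C] unfolding L1ball_def by auto
    then obtain u' where "u' \<in> C" "L1norm M (\<lambda>x. u x - u' x) \<ge> L1norm M u + 1 - e"
      using L1_ccs_far_point[OF noatom nz C _ e] by blast
    ultimately show "\<exists>p\<in>C \<times> C. 2 - e \<le> L1norm M (\<lambda>x. fst p x - snd p x)"
      by (intro bexI[of _ "(u, u')"]) auto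
  qed
qed

lemma L1norm_add_rank_one_le:
  assumes \<phi>: "L1_functional M \<phi>" and f: "f \<in> L1ball M" and g: "g \<in> L1set M"
  shows "L1norm M (\<lambda>x. f x + \<phi> f * g x) \<le> 1 + L1_dual_norm M \<phi> * L1norm M g"
proof -
  have "L1norm M (\<lambda>x. f x + \<phi> f * g x) \<le> L1norm M f + \<bar>\<phi> f\<bar> * L1norm M g"
    using L1norm_add_le[OF _ L1set_cmult[OF g], of f "\<phi> f"] f L1norm_cmult[of M "\<phi> f" g]
    unfolding L1ball_def by simp
  also have "\<dots> \<le> 1 + L1_dual_norm M \<phi> * L1norm M g"
    using f L1_dual_norm_upper[OF \<phi> f] L1norm_nonneg[of M g] unfolding L1ball_def
    by (intro add_mono mult_right_mono) auto
  finally show ?thesis .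
qed

text \<open>A far point \<open>u\<close> of a thin slice of \<open>\<phi>\<close> from \<open>-\<parallel>\<phi>\<parallel> g\<close> is an almost norming point of
  \<open>Id + \<phi> \<otimes> g\<close>, because \<open>\<phi> u\<close> is close to \<open>\<parallel>\<phi>\<parallel>\<close>.\<close>

lemma L1_daugavet_if_no_atom:
  assumes noatom: "\<not> (\<exists>A. is_atom M A \<and> emeasure M A < \<infinity>)"
    and nz: "\<exists>w\<in>L1set M. L1norm M w > 0"
  shows "L1_daugavet M"
  unfolding L1_daugavet_def
proof (intro allI impI, elim conjE)
  fix \<phi> g assume \<phi>: "L1_functional M \<phi>" and g: "g \<in> L1set M" "L1norm M g \<noteq> 0"
  define n where "n = L1_dual_norm M \<phi>"
  define G where "G = L1norm M g"
  have n: "n \<ge> 0" unfolding n_def by (rule L1_dual_norm_nonneg[OF \<phi>])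
  have G: "G > 0" using g(2) L1norm_nonneg[of M g] unfolding G_def by simp
  show "(SUP f\<in>L1ball M. L1norm M (\<lambda>x. f x + \<phi> f * g x)) = 1 + L1_dual_norm M \<phi> * L1norm M g"
    unfolding n_def[symmetric] G_def[symmetric]
  proof (rule cSUP_eq_approx)
    show "L1ball M \<noteq> {}" using zero_in_L1ball by auto
    show "L1norm M (\<lambda>x. f x + \<phi> f * g x) \<le> 1 + n * G" if "f \<in> L1ball M" for f
      unfolding n_def G_def by (rule L1norm_add_rank_one_le[OF \<phi> that g(1)])
  next
    fix e :: real assume e: "e > 0"
    define d where "d = e / (2 * G)"
    have d: "d > 0" "d * G = e / 2" unfolding d_def using e G by auto
    have S: "is_L1_slice M (L1_slice M \<phi> d)" by (rule is_L1_slice_L1_slice[OF \<phi> d(1)])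
    have "e / 2 > 0" using e by simp
    then obtain u where u: "u \<in> L1_slice M \<phi> d"
      and far: "L1norm M (\<lambda>x. (- n) * g x - u x) \<ge> L1norm M (\<lambda>x. (- n) * g x) + 1 - e / 2"
      using L1_ccs_far_point[OF noatom nz is_L1_ccs_slice[OF S] L1set_cmult[OF g(1)]] by blast
    have uL: "u \<in> L1set M" "u \<in> L1ball M" and \<phi>u: "n - d < \<phi> u" "\<phi> u \<le> n"
      using u L1_dual_norm_upper[OF \<phi>, of u] unfolding L1_slice_def L1ball_def n_def by auto
    have "(\<lambda>x. (- n) * g x - u x) = (\<lambda>x. (-1) * (u x + n * g x))" by (simp add: fun_eq_iff)
    then have "L1norm M (\<lambda>x. (- n) * g x - u x) = L1norm M (\<lambda>x. u x + n * g x)"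
      using L1norm_cmult[of M "-1" "\<lambda>x. u x + n * g x"] by simp
    then have "1 + n * G - e / 2 \<le> L1norm M (\<lambda>x. u x + n * g x)"
      using far n L1norm_cmult[of M "- n" g] unfolding G_def by simp
    also have "\<dots> = L1norm M (\<lambda>x. (u x + \<phi> u * g x) + (n - \<phi> u) * g x)"
      by (simp add: algebra_simps)
    also have "\<dots> \<le> L1norm M (\<lambda>x. u x + \<phi> u * g x) + (n - \<phi> u) * G"
      using L1norm_add_le[OF L1set_add[OF uL(1) L1set_cmult[OF g(1), of "\<phi> u"]] L1set_cmult[OF g(1), of "n - \<phi> u"]]
        L1norm_cmult[of M "n - \<phi> u" g] \<phi>u unfolding G_def by simp
    also have "(n - \<phi> u) * G \<le> d * G" using \<phi>u G by (intro mult_right_mono) auto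
    finally show "\<exists>f\<in>L1ball M. 1 + n * G - e \<le> L1norm M (\<lambda>x. f x + \<phi> f * g x)"
      using uL(2) d(2) by (intro bexI[of _ u]) auto
  qed
qed

section \<open>An atom of finite measure destroys all three properties\<close>

lemma abs_integral_indicator_mult_le:
  fixes w :: "'a \<Rightarrow> real"
  shows "\<bar>\<integral>x. indicator A x * w x \<partial>M\<bar> \<le> (\<integral>x. indicator A x * \<bar>w x\<bar> \<partial>M)"
  using integral_abs_bound[of M "\<lambda>x. indicator A x * w x"] by (simp add: abs_mult)

text \<open>On an atom an integrable function has a.e. constant sign.\<close>

lemma atom_integral_indicator_mult_abs:
  fixes w :: "'a \<Rightarrow> real"
  assumes A: "is_atom M A" and w: "integrable M w"
  shows "(\<integral>x. indicator A x * \<bar>w x\<bar> \<partial>M) = \<bar>\<integral>x. indicator A x * w x \<partial>M\<bar>"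
proof -
  have [measurable]: "A \<in> sets M" using A unfolding is_atom_def by auto
  have [measurable]: "w \<in> borel_measurable M" using w by auto
  define P where "P = A \<inter> {x\<in>space M. w x > 0}"
  have P: "P \<in> sets M" unfolding P_def by measurable
  have nonneg: "(\<integral>x. indicator A x * \<bar>w x\<bar> \<partial>M) \<ge> 0" by (intro integral_nonneg_AE) auto
  have "emeasure M P = 0 \<or> emeasure M (A - P) = 0"
    using A P unfolding is_atom_def P_def by auto
  then show ?thesis
  proof
    assume "emeasure M P = 0"
    then have "AE x in M. indicator A x * \<bar>w x\<bar> = - (indicator A x * w x)"
      using P by (intro AE_I'[of P]) (auto simp: P_def indicator_def)
    then have "(\<integral>x. indicator A x * \<bar>w x\<bar> \<partial>M) = (\<integral>x. - (indicator A x * w x) \<partial>M)"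
      by (intro integral_cong_AE) auto
    then show ?thesis using nonneg by simp
  next
    assume "emeasure M (A - P) = 0"
    then have "AE x in M. indicator A x * \<bar>w x\<bar> = indicator A x * w x"
      using P by (intro AE_I'[of "A - P"]) (auto simp: P_def indicator_def)
    then have "(\<integral>x. indicator A x * \<bar>w x\<bar> \<partial>M) = (\<integral>x. indicator A x * w x \<partial>M)"
      by (intro integral_cong_AE) auto
    then show ?thesis using nonneg by simp
  qed
qed

lemma L1_functional_indicator:
  assumes A: "A \<in> sets M"
  shows "L1_functional M (\<lambda>f. \<integral>x. indicator A x * f x \<partial>M)"
  unfolding L1_functional_def
proof (intro conjI ballI allI)
  fix f g assume "f \<in> L1set M" "g \<in> L1set M"
  then show "(\<integral>x. indicator A x * (f x + g x) \<partial>M) = (\<integral>x. indicator A x * f x \<partial>M) + (\<integral>x. indicator A x * g x \<partial>M)"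
    using L1set_indicator_mult[OF _ A] unfolding L1set_def by (simp add: distrib_left)
next
  fix f c assume "f \<in> L1set M"
  show "(\<integral>x. indicator A x * (c * f x) \<partial>M) = c * (\<integral>x. indicator A x * f x \<partial>M)"
    by (simp add: mult.left_commute)
next
  show "\<exists>C. \<forall>f\<in>L1set M. \<bar>\<integral>x. indicator A x * f x \<partial>M\<bar> \<le> C * L1norm M f"
  proof (intro exI[of _ 1] ballI)
    fix f assume "f \<in> L1set M"
    then show "\<bar>\<integral>x. indicator A x * f x \<partial>M\<bar> \<le> 1 * L1norm M f"
      using abs_integral_indicator_mult_le[where A=A and w=f and M=M]
        integral_indicator_mult_abs_le_L1norm[OF _ A, of f] by simp
  qed
qed

lemma finite_atom_normalized_indicator:
  assumes A: "is_atom M A" "emeasure M A < \<infinity>"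
  defines "e \<equiv> \<lambda>x. indicator A x / measure M A"
  shows "e \<in> L1set M" "L1norm M e = 1" "(\<integral>x. indicator A x * e x \<partial>M) = 1"
proof -
  have As: "A \<in> sets M" using A unfolding is_atom_def by auto
  have "emeasure M A = ennreal (measure M A)" using A(2) by (intro emeasure_eq_ennreal_measure) auto
  then have pos: "measure M A > 0" using A(1) unfolding is_atom_def by (metis ennreal_less_zero_iff)
  have "integrable M (\<lambda>x. indicator A x :: real)" using A As by (intro integrable_real_indicator) auto
  then show "e \<in> L1set M" unfolding L1set_def e_def by auto
  have "(\<integral>x. indicator A x \<partial>M) = measure M A" using As A(2) by simp
  moreover have "(\<lambda>x. indicator A x * e x) = e" "(\<lambda>x. \<bar>e x\<bar>) = e"
    unfolding e_def using pos by (auto simp: indicator_def fun_eq_iff)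
  ultimately show "L1norm M e = 1" "(\<integral>x. indicator A x * e x \<partial>M) = 1"
    using pos unfolding L1norm_def by (simp_all add: e_def)
qed

lemma L1_dual_norm_indicator_finite_atom:
  assumes A: "is_atom M A" "emeasure M A < \<infinity>"
  shows "L1_dual_norm M (\<lambda>f. \<integral>x. indicator A x * f x \<partial>M) = 1"
proof (rule antisym)
  have As: "A \<in> sets M" using A unfolding is_atom_def by auto
  show "L1_dual_norm M (\<lambda>f. \<integral>x. indicator A x * f x \<partial>M) \<le> 1"
    unfolding L1_dual_norm_def
  proof (rule cSUP_least)
    fix f assume "f \<in> L1ball M"
    then show "\<bar>\<integral>x. indicator A x * f x \<partial>M\<bar> \<le> 1"
      using abs_integral_indicator_mult_le[where A=A and w=f and M=M]
        integral_indicator_mult_abs_le_L1norm[OF _ As, of f]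
      unfolding L1ball_def by auto
  qed (use zero_in_L1ball in auto)
  note e = finite_atom_normalized_indicator[OF A]
  have "(\<lambda>x. indicator A x / measure M A) \<in> L1ball M" using e(1,2) unfolding L1ball_def by simp
  then show "1 \<le> L1_dual_norm M (\<lambda>f. \<integral>x. indicator A x * f x \<partial>M)"
    using L1_dual_norm_upper[OF L1_functional_indicator[OF As]] e(3) by fastforce
qed

text \<open>Subtracting from \<open>f\<close> its mean over an atom makes it vanish a.e. on the atom.\<close>

lemma L1norm_remove_atom_le:
  assumes A: "is_atom M A" "emeasure M A < \<infinity>" and f: "f \<in> L1set M"
  defines "h \<equiv> \<lambda>x. f x - (\<integral>y. indicator A y * f y \<partial>M) * (indicator A x / measure M A)"
  shows "L1norm M h \<le> L1norm M f"
proof -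
  have As: "A \<in> sets M" using A unfolding is_atom_def by auto
  let ?\<phi> = "\<lambda>f. \<integral>x. indicator A x * f x \<partial>M"
  note e = finite_atom_normalized_indicator[OF A]
  have \<phi>: "L1_functional M ?\<phi>" by (rule L1_functional_indicator[OF As])
  have h_eq: "h = (\<lambda>x. f x + (- ?\<phi> f) * (indicator A x / measure M A))" unfolding h_def by simp
  have hL: "h \<in> L1set M" unfolding h_eq by (intro L1set_add L1set_cmult f e(1))
  have "?\<phi> h = 0"
    unfolding h_eq L1_functional_add[OF \<phi> f L1set_cmult[OF e(1)]] L1_functional_cmult[OF \<phi> e(1)]
    using e(3) by simp
  then have on_A: "(\<integral>x. indicator A x * \<bar>h x\<bar> \<partial>M) = 0"
    using atom_integral_indicator_mult_abs[OF A(1), of h] hL unfolding L1set_def by simp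
  have "(\<lambda>x. \<bar>h x\<bar>) = (\<lambda>x. indicator A x * \<bar>h x\<bar> + (\<bar>f x\<bar> - indicator A x * \<bar>f x\<bar>))"
    unfolding h_def by (auto simp: indicator_def fun_eq_iff)
  then have "L1norm M h = (\<integral>x. indicator A x * \<bar>h x\<bar> + (\<bar>f x\<bar> - indicator A x * \<bar>f x\<bar>) \<partial>M)"
    unfolding L1norm_def by (rule arg_cong)
  also have "\<dots> = (\<integral>x. indicator A x * \<bar>h x\<bar> \<partial>M) + (L1norm M f - (\<integral>x. indicator A x * \<bar>f x\<bar> \<partial>M))"
    using integrable_indicator_mult_abs[OF hL As] integrable_indicator_mult_abs[OF f As] f
    unfolding L1norm_def L1set_def by simp
  finally show ?thesis using on_A integral_indicator_mult_abs_nonneg[where w=f and E=A and M=M] by simp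
qed

lemma not_L1_daugavet_if_atom:
  assumes A: "is_atom M A" "emeasure M A < \<infinity>"
  shows "\<not> L1_daugavet M"
proof
  assume D: "L1_daugavet M"
  have As: "A \<in> sets M" using A unfolding is_atom_def by auto
  let ?\<phi> = "\<lambda>f. \<integral>x. indicator A x * f x \<partial>M"
  define g where "g x = (-1) * (indicator A x / measure M A)" for x
  note e = finite_atom_normalized_indicator[OF A]
  have "g \<in> L1set M" unfolding g_def by (rule L1set_cmult[OF e(1)])
  moreover have "L1norm M g = 1" unfolding g_def L1norm_cmult using e(2) by simp
  ultimately have g: "g \<in> L1set M" "L1norm M g = 1" by blast+
  have "(SUP f\<in>L1ball M. L1norm M (\<lambda>x. f x + ?\<phi> f * g x)) = 1 + L1_dual_norm M ?\<phi> * L1norm M g"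
    using D L1_functional_indicator[OF As] g L1_dual_norm_indicator_finite_atom[OF A]
    unfolding L1_daugavet_def by simp
  then have "(SUP f\<in>L1ball M. L1norm M (\<lambda>x. f x + ?\<phi> f * g x)) = 2"
    using g L1_dual_norm_indicator_finite_atom[OF A] by simp
  moreover have "(SUP f\<in>L1ball M. L1norm M (\<lambda>x. f x + ?\<phi> f * g x)) \<le> 1"
  proof (rule cSUP_least)
    fix f assume "f \<in> L1ball M"
    then show "L1norm M (\<lambda>x. f x + ?\<phi> f * g x) \<le> 1"
      using L1norm_remove_atom_le[OF A, of f] unfolding g_def L1ball_def by simp
  qed (use zero_in_L1ball in auto)
  ultimately show False by simp
qed

lemma L1norm_midpoint_le_atom:
  assumes A: "is_atom M A" and u: "u \<in> L1ball M" and v: "v \<in> L1ball M" and \<delta>: "0 < \<delta>" "\<delta> \<le> 1"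
    and \<phi>u: "(\<integral>x. indicator A x * u x \<partial>M) > 1 - \<delta>" and \<phi>v: "(\<integral>x. indicator A x * v x \<partial>M) < - (1 - \<delta>)"
  shows "L1norm M (\<lambda>x. (1/2) * u x + (1/2) * v x) \<le> \<delta>"
proof -
  have As: "A \<in> sets M" using A unfolding is_atom_def by auto
  let ?\<phi> = "\<lambda>f. \<integral>x. indicator A x * f x \<partial>M"
  let ?in = "\<lambda>f. \<integral>x. indicator A x * \<bar>f x\<bar> \<partial>M"
  define c where "c x = (1/2) * u x + (1/2) * v x" for x
  have uL: "u \<in> L1set M" "L1norm M u \<le> 1" and vL: "v \<in> L1set M" "L1norm M v \<le> 1"
    using u v unfolding L1ball_def by auto
  have cL: "c \<in> L1set M" unfolding c_def by (intro L1set_add L1set_cmult uL(1) vL(1))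
  have \<phi>: "L1_functional M ?\<phi>" by (rule L1_functional_indicator[OF As])
  have "?\<phi> c = ?\<phi> (\<lambda>x. (1/2) * u x) + ?\<phi> (\<lambda>x. (1/2) * v x)"
    unfolding c_def by (rule L1_functional_add[OF \<phi> L1set_cmult[OF uL(1)] L1set_cmult[OF vL(1)]])
  also have "\<dots> = (1/2) * ?\<phi> u + (1/2) * ?\<phi> v"
    unfolding L1_functional_cmult[OF \<phi> uL(1)] L1_functional_cmult[OF \<phi> vL(1)] ..
  finally have \<phi>c: "?\<phi> c = (1/2) * ?\<phi> u + (1/2) * ?\<phi> v" .
  have on_A: "?in c = \<bar>?\<phi> c\<bar>"
    using atom_integral_indicator_mult_abs[OF A] cL unfolding L1set_def by simp
  have off_A: "L1norm M c - ?in c \<le> (1/2) * (L1norm M u - ?in u) + (1/2) * (L1norm M v - ?in v)"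
  proof -
    have "(\<integral>x. \<bar>c x\<bar> - indicator A x * \<bar>c x\<bar> \<partial>M)
        \<le> (\<integral>x. (1/2) * (\<bar>u x\<bar> - indicator A x * \<bar>u x\<bar>) + (1/2) * (\<bar>v x\<bar> - indicator A x * \<bar>v x\<bar>) \<partial>M)"
    proof (rule integral_mono)
      fix x
      have "\<bar>c x\<bar> \<le> (1/2) * \<bar>u x\<bar> + (1/2) * \<bar>v x\<bar>" unfolding c_def by (simp add: abs_triangle_ineq[THEN order_trans])
      then show "\<bar>c x\<bar> - indicator A x * \<bar>c x\<bar>
          \<le> (1/2) * (\<bar>u x\<bar> - indicator A x * \<bar>u x\<bar>) + (1/2) * (\<bar>v x\<bar> - indicator A x * \<bar>v x\<bar>)"
        by (auto simp: indicator_def)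
    qed (use cL uL vL integrable_indicator_mult_abs[OF _ As] in \<open>auto simp: L1set_def\<close>)
    then show ?thesis
      using cL uL vL integrable_indicator_mult_abs[OF _ As] unfolding L1norm_def L1set_def
      by (simp add: integrable_indicator_mult_abs[OF _ As, unfolded L1set_def])
  qed
  have "\<bar>?\<phi> u\<bar> \<le> ?in u" "\<bar>?\<phi> v\<bar> \<le> ?in v" by (rule abs_integral_indicator_mult_le)+
  then have in_u: "L1norm M u - ?in u \<le> 1 - \<bar>?\<phi> u\<bar>" and in_v: "L1norm M v - ?in v \<le> 1 - \<bar>?\<phi> v\<bar>"
    using uL(2) vL(2) by linarith+
  have "L1norm M c \<le> \<bar>?\<phi> c\<bar> + (1/2) * (L1norm M u - ?in u) + (1/2) * (L1norm M v - ?in v)"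
    using off_A on_A by linarith
  also have "\<dots> \<le> \<bar>?\<phi> c\<bar> + (1/2) * (1 - \<bar>?\<phi> u\<bar>) + (1/2) * (1 - \<bar>?\<phi> v\<bar>)"
    using in_u in_v by (intro add_mono mult_left_mono order_refl) auto
  also have "\<dots> \<le> \<delta>"
    unfolding \<phi>c using \<phi>u \<phi>v \<delta> by (cases "?\<phi> u + ?\<phi> v \<ge> 0") (simp_all add: abs_if field_simps)
  finally show ?thesis unfolding c_def .
qed

lemma L1_ccs_small_if_atom:
  assumes A: "is_atom M A" "emeasure M A < \<infinity>"
  obtains C where "is_L1_ccs M C" "\<And>c. c \<in> C \<Longrightarrow> c \<in> L1set M \<and> L1norm M c \<le> 1 / 2"
proof -
  have As: "A \<in> sets M" using A unfolding is_atom_def by auto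
  define \<phi> :: "('a \<Rightarrow> real) \<Rightarrow> real" where "\<phi> f = (\<integral>x. indicator A x * f x \<partial>M)" for f
  have \<phi>: "L1_functional M \<phi>" "L1_functional M (\<lambda>f. - \<phi> f)"
    unfolding \<phi>_def using L1_functional_indicator[OF As] by (auto intro: L1_functional_uminus)
  have \<phi>n: "L1_dual_norm M \<phi> = 1" "L1_dual_norm M (\<lambda>f. - \<phi> f) = 1"
    unfolding \<phi>_def L1_dual_norm_uminus using L1_dual_norm_indicator_finite_atom[OF A] by simp_all
  define S where "S i = (if i = 0 then L1_slice M \<phi> (1/2) else L1_slice M (\<lambda>f. - \<phi> f) (1/2))" for i :: nat
  define C where "C = {(\<lambda>x. \<Sum>i<2. (1/2) * w i x) | w. \<forall>i<2. w i \<in> S i}"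
  have "is_L1_ccs M C"
    unfolding is_L1_ccs_def
  proof (intro exI[of _ 2] exI[of _ "\<lambda>_. 1/2"] exI[of _ S] conjI)
    show "\<forall>i<2. 0 < (1/2::real) \<and> (1/2::real) \<le> 1 \<and> is_L1_slice M (S i)"
      unfolding S_def using is_L1_slice_L1_slice[OF \<phi>(1)] is_L1_slice_L1_slice[OF \<phi>(2)] by auto
  qed (auto simp: C_def)
  moreover have "c \<in> L1set M \<and> L1norm M c \<le> 1 / 2" if c: "c \<in> C" for c
  proof -
    obtain w where w: "\<forall>i<2. w i \<in> S i" and c: "c = (\<lambda>x. \<Sum>i<2. (1/2) * w i x)"
      using c unfolding C_def by blast
    have w0: "w 0 \<in> L1ball M" "\<phi> (w 0) > 1 - 1/2" and w1: "w 1 \<in> L1ball M" "- \<phi> (w 1) > 1 - 1/2"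
      using w[rule_format, of 0] w[rule_format, of 1] \<phi>n unfolding S_def L1_slice_def by auto
    have c_eq: "c = (\<lambda>x. (1/2) * w 0 x + (1/2) * w 1 x)" unfolding c by (simp add: numeral_2_eq_2)
    have "L1norm M c \<le> 1/2"
      unfolding c_eq using w0 w1 unfolding \<phi>_def by (intro L1norm_midpoint_le_atom[OF A(1)]) auto
    moreover have "c \<in> L1set M"
      unfolding c_eq by (intro L1set_add L1set_cmult) (use w0(1) w1(1) in \<open>auto simp: L1ball_def\<close>)
    ultimately show ?thesis by simp
  qed
  ultimately show ?thesis using that by blast
qed

lemma not_L1_SD2P_if_atom:
  assumes A: "is_atom M A" "emeasure M A < \<infinity>"
  shows "\<not> L1_SD2P M"
proof
  assume "L1_SD2P M"
  obtain C where C: "is_L1_ccs M C" "\<And>c. c \<in> C \<Longrightarrow> c \<in> L1set M \<and> L1norm M c \<le> 1 / 2"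
    using L1_ccs_small_if_atom[OF A] by blast
  have "(SUP p\<in>C \<times> C. L1norm M (\<lambda>x. fst p x - snd p x)) \<le> 1"
  proof (rule cSUP_least)
    show "C \<times> C \<noteq> {}" using L1_ccs_nonempty[OF C(1)] by auto
    fix p assume "p \<in> C \<times> C"
    then have "fst p \<in> L1set M" "L1norm M (fst p) \<le> 1/2" "snd p \<in> L1set M" "L1norm M (snd p) \<le> 1/2"
      using C(2) by auto
    then show "L1norm M (\<lambda>x. fst p x - snd p x) \<le> 1"
      using L1norm_diff_le[of "fst p" M "snd p"] by simp
  qed
  moreover have "(SUP p\<in>C \<times> C. L1norm M (\<lambda>x. fst p x - snd p x)) = 2"
    using \<open>L1_SD2P M\<close> C(1) unfolding L1_SD2P_def by blast
  ultimately show False by simp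
qed

lemma no_L1_ccs_daugavet_point_if_atom:
  assumes A: "is_atom M A" "emeasure M A < \<infinity>"
  shows "\<not> (\<exists>z. L1_ccs_daugavet_point M z)"
proof
  assume "\<exists>z. L1_ccs_daugavet_point M z"
  then obtain z where z: "z \<in> L1sphere M" "\<And>C. is_L1_ccs M C \<Longrightarrow> (SUP w\<in>C. L1norm M (\<lambda>x. z x - w x)) = 2"
    unfolding L1_ccs_daugavet_point_def by blast
  obtain C where C: "is_L1_ccs M C" "\<And>c. c \<in> C \<Longrightarrow> c \<in> L1set M \<and> L1norm M c \<le> 1 / 2"
    using L1_ccs_small_if_atom[OF A] by blast
  have "(SUP w\<in>C. L1norm M (\<lambda>x. z x - w x)) \<le> 3/2"
  proof (rule cSUP_least)
    show "C \<noteq> {}" by (rule L1_ccs_nonempty[OF C(1)])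
    fix w assume "w \<in> C"
    then have "w \<in> L1set M" "L1norm M w \<le> 1/2" using C(2) by auto
    then show "L1norm M (\<lambda>x. z x - w x) \<le> 3/2"
      using L1norm_diff_le[of z M w] z(1) unfolding L1sphere_def by simp
  qed
  then show False using z(2)[OF C(1)] by simp
qed

theorem mainTheorem13:
  fixes M :: "'a measure"
  assumes nontrivial: "\<exists>A\<in>sets M. 0 < emeasure M A \<and> emeasure M A < \<infinity>"
  shows "(L1_daugavet M \<longleftrightarrow> (\<exists>z. L1_ccs_daugavet_point M z))
       \<and> ((\<exists>z. L1_ccs_daugavet_point M z) \<longleftrightarrow> L1_SD2P M)
       \<and> (L1_SD2P M \<longleftrightarrow> \<not> (\<exists>A. is_atom M A \<and> emeasure M A < \<infinity>))"
proof -
  have nz: "\<exists>w\<in>L1set M. L1norm M w > 0" by (rule L1_nonzero_element[OF nontrivial])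
  have "L1_daugavet M \<longleftrightarrow> \<not> (\<exists>A. is_atom M A \<and> emeasure M A < \<infinity>)"
    using L1_daugavet_if_no_atom[OF _ nz] not_L1_daugavet_if_atom by blast
  moreover have "(\<exists>z. L1_ccs_daugavet_point M z) \<longleftrightarrow> \<not> (\<exists>A. is_atom M A \<and> emeasure M A < \<infinity>)"
    using L1_ccs_daugavet_point_if_no_atom[OF _ nz] no_L1_ccs_daugavet_point_if_atom by blast
  moreover have "L1_SD2P M \<longleftrightarrow> \<not> (\<exists>A. is_atom M A \<and> emeasure M A < \<infinity>)"
    using L1_SD2P_if_no_atom[OF _ nz] not_L1_SD2P_if_atom by blast
  ultimately show ?thesis by blast
qed

end
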